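(* Let $(\Omega,\mathscr{F},\mathbb{P})$ be a probability space, $\mathscr{G}\subseteq\mathscr{F}$ a sub-$\sigma$-algebra, $N\geq1$ dyadic, $D>0$, $T>0$. If $\omega\in\Omega\mapsto v^\omega\in X_{N,D}([0,T])$ is strongly $\mathscr{G}$-measurable, then the map $$(\omega,\tau)\in\Omega\times[0,T]\mapsto\|v^\omega\|_{X_{N,D}([0,\tau])}\in\mathbb{R}_{\geq0}$$ is measurable with respect to the product $\sigma$-algebra $\mathscr{G}\otimes\mathscr{B}([0,T])$, where $\mathscr{B}([0,T])$ is the Borel $\sigma$-algebra. The analogous statement holds with $X_{N,D}$ replaced by $X_{\leq N,D}$, $S_{N,D}$, or $S_{\leq N,D}$.
   Context: Let $\phi:\mathbb{R}^3\to\mathbb{R}$ be smooth with $\phi\equiv1$ on $B(0,1)$, $\phi\equiv0$ outside $B(0,2)$; $\psi_1=\phi$, $\psi_M(\xi)=\phi(\xi/M)-\phi(2\xi/M)$ for dyadic $M\geq2$; $P_M$ is the multiplier with symbol $\psi_M$. $c_{N,D}(M)=\max(N/M,M/N)^D$, $c_{\leq N,D}(M)=\max(1,M/N)^D$. $X_{N,D}([0,T])$ is the space of $u\in C^0_tL^2_x([0,T]\times\mathbb{R}^3)$ with $\|u\|_{X_{N,D}([0,T])}=\sum_{M}c_{N,D}(M)\|P_Mu\|_{L^\infty_tL^2_x([0,T]\times\mathbb{R}^3)}<\infty$; $X_{\leq N,D}$ is defined the same way with $c_{\leq N,D}$; $S_{N,D}([0,T])$, $S_{\leq N,D}([0,T])$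 are the spaces of $u\in L^2_tL^\infty_x([0,T]\times\mathbb{R}^3)$ with finite norm $\sum_Mc(M)\|P_Mu\|_{L^2_tL^\infty_x([0,T]\times\mathbb{R}^3)}$ for $c=c_{N,D}$, resp. $c_{\leq N,D}$. A map $v:\Omega\to E$ into a Banach space is simple if $v=\sum_{i=1}^k1_{F_i}x_i$ with $F_i$ measurable and $x_i\in E$; it is strongly $\mathscr{G}$-measurable if it is a pointwise limit of simple functions with $F_i\in\mathscr{G}$. *)

theory Defs
  imports "HOL-Analysis.Analysis" "HOL-Probability.Probability"
begin

type_synonym fn = "real \<Rightarrow> real^3 \<Rightarrow> complex"

text \<open>C-infinity: Frechet differentiable to every order; F ds is the iterated
derivative applied to the directions ds.\<close>
definition smooth3 :: "(real^3 \<Rightarrow> real) \<Rightarrow> bool" where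
  "smooth3 f \<longleftrightarrow> (\<exists>F :: (real^3) list \<Rightarrow> real^3 \<Rightarrow> real. F [] = f \<and>
      (\<forall>ds x. (F ds has_derivative (\<lambda>h. F (h # ds) x)) (at x)))"

definition psi :: "(real^3 \<Rightarrow> real) \<Rightarrow> real \<Rightarrow> real^3 \<Rightarrow> real" where
  "psi \<phi> M \<xi> = (if M = 1 then \<phi> \<xi> else \<phi> ((1 / M) *\<^sub>R \<xi>) - \<phi> ((2 / M) *\<^sub>R \<xi>))"

text \<open>P_M as the Fourier multiplier with symbol psi_M, realised as convolution with
the inverse Fourier transform of psi_M (Fourier transform: integral of f(x) e^{-i x.xi}).\<close>
definition LP_kernel :: "(real^3 \<Rightarrow> real) \<Rightarrow> real \<Rightarrow> real^3 \<Rightarrow> complex" where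
  "LP_kernel \<phi> M z = complex_of_real (1 / (2 * pi) ^ 3) *
      (LINT \<xi>|lborel. complex_of_real (psi \<phi> M \<xi>) * cis (z \<bullet> \<xi>))"

definition LP :: "(real^3 \<Rightarrow> real) \<Rightarrow> real \<Rightarrow> (real^3 \<Rightarrow> complex) \<Rightarrow> real^3 \<Rightarrow> complex" where
  "LP \<phi> M f x = (LINT y|lborel. LP_kernel \<phi> M (x - y) * f y)"

definition cND :: "real \<Rightarrow> real \<Rightarrow> real \<Rightarrow> real" where
  "cND N D M = (max (N / M) (M / N)) powr D"

definition cleND :: "real \<Rightarrow> real \<Rightarrow> real \<Rightarrow> real" where
  "cleND N D M = (max 1 (M / N)) powr D"

definition sq_int :: "(real^3 \<Rightarrow> complex) \<Rightarrow> bool" where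
  "sq_int f \<longleftrightarrow> f \<in> borel_measurable lborel \<and> integrable lborel (\<lambda>x. (cmod (f x))\<^sup>2)"

definition L2x :: "(real^3 \<Rightarrow> complex) \<Rightarrow> real" where
  "L2x f = sqrt (LINT x|lborel. (cmod (f x))\<^sup>2)"

definition CL2 :: "real \<Rightarrow> fn \<Rightarrow> bool" where
  "CL2 T u \<longleftrightarrow> (\<forall>t\<in>{0..T}. sq_int (u t)) \<and>
     (\<forall>t\<in>{0..T}. ((\<lambda>s. L2x (\<lambda>x. u s x - u t x)) \<longlongrightarrow> 0) (at t within {0..T}))"

text \<open>L^infty_t L^2_x([0,tau]) norm (sup over time; functions are continuous in time)\<close>
definition LinfL2 :: "real \<Rightarrow> fn \<Rightarrow> ennreal" where
  "LinfL2 \<tau> u = (SUP t\<in>{0..\<tau>}. ennreal (L2x (u t)))"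

definition Linfx :: "(real^3 \<Rightarrow> complex) \<Rightarrow> ennreal" where
  "Linfx f = e2ennreal (esssup lborel (\<lambda>x. ereal (cmod (f x))))"

definition L2Linf :: "real \<Rightarrow> fn \<Rightarrow> ennreal" where
  "L2Linf \<tau> u = (let I = (\<integral>\<^sup>+ t. indicator {0..\<tau>} t * (Linfx (u t))\<^sup>2 \<partial>lborel)
     in if I = \<infinity> then \<infinity> else ennreal (sqrt (enn2real I)))"

definition L2tLinfx_space :: "real \<Rightarrow> fn \<Rightarrow> bool" where
  "L2tLinfx_space T u \<longleftrightarrow>
     (\<lambda>(t, x). u t x) \<in> borel_measurable (restrict_space lborel {0..T} \<Otimes>\<^sub>M lborel) \<and>
     L2Linf T u < \<infinity>"

definition Xnorm :: "(real^3 \<Rightarrow> real) \<Rightarrow> (real \<Rightarrow> real) \<Rightarrow> real \<Rightarrow> fn \<Rightarrow> ennreal" where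
  "Xnorm \<phi> c \<tau> u = (\<Sum>k. ennreal (c (2 ^ k)) * LinfL2 \<tau> (\<lambda>t. LP \<phi> (2 ^ k) (u t)))"

definition Snorm :: "(real^3 \<Rightarrow> real) \<Rightarrow> (real \<Rightarrow> real) \<Rightarrow> real \<Rightarrow> fn \<Rightarrow> ennreal" where
  "Snorm \<phi> c \<tau> u = (\<Sum>k. ennreal (c (2 ^ k)) * L2Linf \<tau> (\<lambda>t. LP \<phi> (2 ^ k) (u t)))"

definition Xspace :: "(real^3 \<Rightarrow> real) \<Rightarrow> (real \<Rightarrow> real) \<Rightarrow> real \<Rightarrow> fn \<Rightarrow> bool" where
  "Xspace \<phi> c T u \<longleftrightarrow> CL2 T u \<and> Xnorm \<phi> c T u < \<infinity>"

definition Sspace :: "(real^3 \<Rightarrow> real) \<Rightarrow> (real \<Rightarrow> real) \<Rightarrow> real \<Rightarrow> fn \<Rightarrow> bool" where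
  "Sspace \<phi> c T u \<longleftrightarrow> L2tLinfx_space T u \<and> Snorm \<phi> c T u < \<infinity>"

definition strongly_meas :: "'w measure \<Rightarrow> (fn \<Rightarrow> bool) \<Rightarrow> (fn \<Rightarrow> ennreal) \<Rightarrow> ('w \<Rightarrow> fn) \<Rightarrow> bool" where
  "strongly_meas G inE nrm v \<longleftrightarrow> (\<exists>s :: nat \<Rightarrow> ('w set \<times> fn) list.
     (\<forall>n. \<forall>(F, x)\<in>set (s n). F \<in> sets G \<and> inE x) \<and>
     (\<forall>\<omega>\<in>space G. ((\<lambda>n. nrm (\<lambda>t y. (\<Sum>(F, x)\<leftarrow>s n. indicator F \<omega> * x t y) - v \<omega> t y))
         \<longlongrightarrow> 0) sequentially))"

end

theory Submission
  imports Defs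
begin

(* For a fixed u the map tau -> ||u||_[0,tau] is monotone, hence Borel measurable. For a simple
   map omega -> sum_i 1_{F_i}(omega) x_i the norm at (omega, tau) depends on omega only through
   the finitely many events F_i, so it is G x B([0,T])-measurable. The norms satisfy
   ||a||_[0,tau] <= ||b||_[0,tau] + ||a - b||_[0,T] for tau <= T, because every P_M is
   convolution with a bounded integrable kernel: integrating by parts four times in the Fourier
   integral along a coordinate direction e gives |z.e|^4 |K(z)| <= C, and this decay is
   summable over dyadic cubes of R^3. Hence the norms of the simple approximations of v converge
   pointwise to ||v^omega||_[0,tau], and measurability passes to the limit. *)

section \<open>Measurability of norms of strongly measurable maps\<close>

lemma borel_measurable_mono_linorder:
  fixes g :: "real \<Rightarrow> 'b::{linorder_topology, second_countable_topology}"
  assumes "mono g"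
  shows "g \<in> borel_measurable borel"
proof (rule borel_measurableI_less)
  fix y
  have "is_interval {x. g x < y}"
    unfolding is_interval_1 using assms by (auto simp: mono_def intro: le_less_trans)
  then show "{x \<in> space borel. g x < y} \<in> sets borel"
    using real_interval_borel_measurable by simp
qed

lemma tendsto_enn2real_of_two_sided_bound:
  fixes a d :: "nat \<Rightarrow> ennreal"
  assumes "A \<noteq> \<infinity>" and "\<And>n. a n \<le> A + d n" and "\<And>n. A \<le> a n + d n" and "d \<longlonglongrightarrow> 0"
  shows "(\<lambda>n. enn2real (a n)) \<longlonglongrightarrow> enn2real A"
proof -
  have "(\<lambda>n. A - d n) \<longlonglongrightarrow> A"
    using tendsto_diff_ennreal_general[OF tendsto_const assms(4), of A] by simp
  moreover have "(\<lambda>n. A + d n) \<longlonglongrightarrow> A"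
    using tendsto_add[OF tendsto_const assms(4), of A] by simp
  moreover have "A - d n \<le> a n" for n
    using assms(1,3) by (simp add: ennreal_minus_le_iff add.commute)
  ultimately have "a \<longlonglongrightarrow> A"
    using assms(2) by (intro tendsto_sandwich[of "\<lambda>n. A - d n" a sequentially "\<lambda>n. A + d n"]) auto
  then show ?thesis
    using assms(1) by (cases A) (auto intro: tendsto_enn2real)
qed

definition simple_fn :: "('w set \<times> fn) list \<Rightarrow> 'w \<Rightarrow> fn" where
  "simple_fn L \<omega> = (\<lambda>t y. \<Sum>(F, x)\<leftarrow>L. indicator F \<omega> * x t y)"

lemma simple_fn_Cons:
  "simple_fn ((F, x) # L) \<omega> = (if \<omega> \<in> F then (\<lambda>t y. x t y + simple_fn L \<omega> t y) else simple_fn L \<omega>)"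
  by (simp add: simple_fn_def fun_eq_iff)

lemma measurable_comp_simple_fn:
  fixes \<Phi> :: "fn \<Rightarrow> 'r \<Rightarrow> real"
  assumes "\<forall>(F, x)\<in>set L. F \<in> sets G" and "\<And>u. \<Phi> u \<in> borel_measurable R"
  shows "(\<lambda>(\<omega>, r). \<Phi> (simple_fn L \<omega>) r) \<in> borel_measurable (G \<Otimes>\<^sub>M R)"
  using assms
proof (induction L arbitrary: \<Phi>)
  case Nil
  have "(\<lambda>z. \<Phi> (simple_fn [] undefined) (snd z)) \<in> borel_measurable (G \<Otimes>\<^sub>M R)"
    using measurable_compose[OF measurable_snd Nil.prems(2)] .
  then show ?case
    by (simp add: simple_fn_def case_prod_beta')
next
  case (Cons p L)
  obtain F x where p: "p = (F, x)" by force
  have F: "F \<in> sets G" and L: "\<forall>(F, x)\<in>set L. F \<in> sets G"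
    using Cons.prems(1) p by auto
  have "{z \<in> space (G \<Otimes>\<^sub>M R). fst z \<in> F} = F \<times> space R"
    using sets.sets_into_space[OF F] by (auto simp: space_pair_measure)
  then have "{z \<in> space (G \<Otimes>\<^sub>M R). fst z \<in> F} \<in> sets (G \<Otimes>\<^sub>M R)"
    using F by simp
  moreover have "(\<lambda>(\<omega>, r). \<Phi> (\<lambda>t y. x t y + simple_fn L \<omega> t y) r) \<in> borel_measurable (G \<Otimes>\<^sub>M R)"
    by (rule Cons.IH[OF L]) (rule Cons.prems(2))
  moreover have "(\<lambda>(\<omega>, r). \<Phi> (simple_fn L \<omega>) r) \<in> borel_measurable (G \<Otimes>\<^sub>M R)"
    by (rule Cons.IH[OF L]) (rule Cons.prems(2))
  ultimately have "(\<lambda>(\<omega>, r). if \<omega> \<in> F then \<Phi> (\<lambda>t y. x t y + simple_fn L \<omega> t y) r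
      else \<Phi> (simple_fn L \<omega>) r) \<in> borel_measurable (G \<Otimes>\<^sub>M R)"
    unfolding case_prod_beta' by (rule measurable_If[rotated 2])
  then show ?case
    by (simp add: p simple_fn_Cons case_prod_beta' if_distrib[of "\<lambda>u. \<Phi> u _"])
qed

lemma simple_fn_closed:
  assumes "P (\<lambda>t y. 0)" and "\<And>a b c. P a \<Longrightarrow> P b \<Longrightarrow> P (\<lambda>t y. c * a t y + b t y)"
    and "\<forall>(F, x)\<in>set L. P x"
  shows "P (simple_fn L \<omega>)"
  using assms(3)
proof (induction L)
  case Nil
  then show ?case using assms(1) by (simp add: simple_fn_def)
next
  case (Cons p L)
  then show ?case
    using assms(2)[of _ "simple_fn L \<omega>" 1] by (cases p) (auto simp: simple_fn_Cons)
qed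

lemma tendsto_enn2real_norm_restrict:
  fixes Nrm :: "real \<Rightarrow> fn \<Rightarrow> ennreal"
  assumes triangle: "\<And>a b. P a \<Longrightarrow> P b \<Longrightarrow> Nrm \<tau> a \<le> Nrm \<tau> b + Nrm T (\<lambda>t y. a t y - b t y)"
    and uminus: "\<And>u. Nrm T (\<lambda>t y. - u t y) = Nrm T u"
    and "P w" and "\<And>n. P (u n)" and "Nrm \<tau> w < \<infinity>"
    and lim: "(\<lambda>n. Nrm T (\<lambda>t y. u n t y - w t y)) \<longlonglongrightarrow> 0"
  shows "(\<lambda>n. enn2real (Nrm \<tau> (u n))) \<longlonglongrightarrow> enn2real (Nrm \<tau> w)"
proof (rule tendsto_enn2real_of_two_sided_bound[OF _ _ _ lim])
  show "Nrm \<tau> w \<noteq> \<infinity>"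
    using \<open>Nrm \<tau> w < \<infinity>\<close> by simp
  show "Nrm \<tau> (u n) \<le> Nrm \<tau> w + Nrm T (\<lambda>t y. u n t y - w t y)" for n
    using triangle[OF \<open>P (u n)\<close> \<open>P w\<close>] .
  show "Nrm \<tau> w \<le> Nrm \<tau> (u n) + Nrm T (\<lambda>t y. u n t y - w t y)" for n
    using triangle[OF \<open>P w\<close> \<open>P (u n)\<close>] uminus[of "\<lambda>t y. u n t y - w t y"] by simp
qed

lemma borel_measurable_norm_of_strongly_meas:
  fixes Nrm :: "real \<Rightarrow> fn \<Rightarrow> ennreal" and P E :: "fn \<Rightarrow> bool" and v :: "'w \<Rightarrow> fn"
  assumes mono: "\<And>u. mono (\<lambda>\<tau>. Nrm \<tau> u)"
    and triangle: "\<And>a b \<tau>. P a \<Longrightarrow> P b \<Longrightarrow> \<tau> \<le> T \<Longrightarrow>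
      Nrm \<tau> a \<le> Nrm \<tau> b + Nrm T (\<lambda>t y. a t y - b t y)"
    and uminus: "\<And>u \<tau>. Nrm \<tau> (\<lambda>t y. - u t y) = Nrm \<tau> u"
    and P_zero: "P (\<lambda>t y. 0)" and P_lin: "\<And>a b c. P a \<Longrightarrow> P b \<Longrightarrow> P (\<lambda>t y. c * a t y + b t y)"
    and E_P: "\<And>u. E u \<Longrightarrow> P u"
    and v: "\<And>\<omega>. \<omega> \<in> space G \<Longrightarrow> E (v \<omega>) \<and> Nrm T (v \<omega>) < \<infinity>"
    and sm: "strongly_meas G E (Nrm T) v"
  shows "(\<lambda>(\<omega>, \<tau>). enn2real (Nrm \<tau> (v \<omega>))) \<in> borel_measurable (G \<Otimes>\<^sub>M restrict_space borel {0..T})"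
proof -
  let ?R = "restrict_space borel {0..T}"
  obtain s :: "nat \<Rightarrow> ('w set \<times> fn) list" where
    s_sets: "\<And>n. \<forall>(F, x)\<in>set (s n). F \<in> sets G \<and> E x" and
    s_lim: "\<And>\<omega>. \<omega> \<in> space G \<Longrightarrow> (\<lambda>n. Nrm T (\<lambda>t y. simple_fn (s n) \<omega> t y - v \<omega> t y)) \<longlonglongrightarrow> 0"
    using sm unfolding strongly_meas_def simple_fn_def by blast
  define f where "f n = (\<lambda>(\<omega>, \<tau>). enn2real (Nrm \<tau> (simple_fn (s n) \<omega>)))" for n
  have f_meas: "f n \<in> borel_measurable (G \<Otimes>\<^sub>M ?R)" for n
    unfolding f_def
  proof (rule measurable_comp_simple_fn)
    show "\<forall>(F, x)\<in>set (s n). F \<in> sets G" using s_sets by fastforce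
    fix u
    have "(\<lambda>\<tau>. Nrm \<tau> u) \<in> borel_measurable borel"
      by (rule borel_measurable_mono_linorder[OF mono])
    then show "(\<lambda>\<tau>. enn2real (Nrm \<tau> u)) \<in> borel_measurable ?R"
      by (intro measurable_restrict_space1) measurable
  qed
  have f_lim: "(\<lambda>n. f n z) \<longlonglongrightarrow> (\<lambda>(\<omega>, \<tau>). enn2real (Nrm \<tau> (v \<omega>))) z"
    if "z \<in> space (G \<Otimes>\<^sub>M ?R)" for z
  proof -
    obtain \<omega> \<tau> where z: "z = (\<omega>, \<tau>)" by (cases z)
    have \<omega>: "\<omega> \<in> space G" and "\<tau> \<le> T"
      using that by (auto simp: z space_pair_measure space_restrict_space)
    have "Nrm \<tau> (v \<omega>) \<le> Nrm T (v \<omega>)"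
      using monoD[OF mono \<open>\<tau> \<le> T\<close>] .
    then have "Nrm \<tau> (v \<omega>) < \<infinity>"
      using v[OF \<omega>] by (auto intro: le_less_trans)
    moreover have "P (simple_fn (s n) \<omega>)" for n
      using s_sets[of n] by (intro simple_fn_closed[of P, OF P_zero P_lin]) (auto intro: E_P)
    ultimately have "(\<lambda>n. enn2real (Nrm \<tau> (simple_fn (s n) \<omega>))) \<longlonglongrightarrow> enn2real (Nrm \<tau> (v \<omega>))"
      using \<open>\<tau> \<le> T\<close> v[OF \<omega>] s_lim[OF \<omega>]
      by (intro tendsto_enn2real_norm_restrict[where P=P]) (auto intro: triangle E_P uminus)
    then show ?thesis by (simp add: f_def z)
  qed
  show ?thesis
    by (rule borel_measurable_LIMSEQ_real[OF f_lim f_meas])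
qed

section \<open>Decay of the Littlewood--Paley kernel\<close>

lemma integrable_continuous_compact_support:
  fixes h :: "'a::euclidean_space \<Rightarrow> 'b::{banach, second_countable_topology}"
  assumes "continuous_on UNIV h" and "\<And>\<xi>. R \<le> norm \<xi> \<Longrightarrow> h \<xi> = 0"
  shows "integrable lborel h"
proof -
  have "integrable lborel (\<lambda>\<xi>. indicator (cball 0 R) \<xi> *\<^sub>R h \<xi>)"
    using assms(1) by (intro borel_integrable_compact) (auto intro: continuous_on_subset)
  also have "(\<lambda>\<xi>. indicator (cball 0 R) \<xi> *\<^sub>R h \<xi>) = h"
    using assms(2) by (auto simp: fun_eq_iff indicator_def)
  finally show ?thesis .
qed

lemma continuous_compact_support_bounded:
  fixes h :: "'a::euclidean_space \<Rightarrow> 'b::real_normed_vector"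
  assumes "continuous_on UNIV h" and "\<And>\<xi>. R \<le> norm \<xi> \<Longrightarrow> h \<xi> = 0"
  obtains B where "\<And>\<xi>. norm (h \<xi>) \<le> B"
proof -
  have "bounded (h ` cball 0 R)"
    using assms(1) by (intro compact_imp_bounded compact_continuous_image) (auto intro: continuous_on_subset)
  then obtain B where B: "\<And>\<xi>. norm \<xi> \<le> R \<Longrightarrow> norm (h \<xi>) \<le> B"
    unfolding bounded_iff by (meson image_eqI mem_cball_0)
  have "norm (h \<xi>) \<le> max B 0" for \<xi>
    using B[of \<xi>] assms(2)[of \<xi>] by (cases "norm \<xi> \<le> R") auto
  then show ?thesis by (rule that)
qed

lemma integrable_translate_continuous_compact_support:
  fixes h :: "'a::euclidean_space \<Rightarrow> 'b::{banach, second_countable_topology}"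
  assumes h: "continuous_on UNIV h" and supp: "\<And>\<xi>. R \<le> norm \<xi> \<Longrightarrow> h \<xi> = 0"
  shows "integrable lborel (\<lambda>\<xi>. h (\<xi> + c))"
proof (rule integrable_continuous_compact_support[where R="R + norm c"])
  show "continuous_on UNIV (\<lambda>\<xi>. h (\<xi> + c))"
    by (rule continuous_on_compose2[OF h]) (auto intro!: continuous_intros)
  show "h (\<xi> + c) = 0" if "R + norm c \<le> norm \<xi>" for \<xi>
    using that supp norm_triangle_ineq4[of "\<xi> + c" c] by simp
qed

lemma integral_lborel_translate:
  fixes h :: "'a::euclidean_space \<Rightarrow> 'b::{banach, second_countable_topology}"
  assumes "h \<in> borel_measurable borel"
  shows "(LINT \<xi>|lborel. h (\<xi> + c)) = integral\<^sup>L lborel h"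
proof -
  have "integral\<^sup>L lborel h = integral\<^sup>L (distr lborel borel ((+) c)) h"
    by (simp add: lborel_distr_plus)
  also have "\<dots> = (LINT \<xi>|lborel. h (c + \<xi>))"
    by (rule integral_distr) (use assms in auto)
  finally show ?thesis by (simp add: add.commute)
qed

lemma difference_quotient_bound:
  fixes h h' :: "'a::euclidean_space \<Rightarrow> real"
  assumes deriv: "\<And>\<xi> t. ((\<lambda>s. h (\<xi> + s *\<^sub>R e)) has_real_derivative h' (\<xi> + t *\<^sub>R e)) (at t)"
    and B: "\<And>\<xi>. \<bar>h' \<xi>\<bar> \<le> B" and supp: "\<And>\<xi>. R \<le> norm \<xi> \<Longrightarrow> h \<xi> = 0"
    and e: "norm e = 1" and t: "0 < t" "t \<le> 1"
  shows "\<bar>(h (\<xi> + t *\<^sub>R e) - h \<xi>) / t\<bar> \<le> B * indicator (cball 0 (R + 1)) \<xi>"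
proof (cases "norm \<xi> \<le> R + 1")
  case True
  obtain s where "h (\<xi> + t *\<^sub>R e) - h (\<xi> + 0 *\<^sub>R e) = (t - 0) * h' (\<xi> + s *\<^sub>R e)"
    using MVT2[of 0 t "\<lambda>s. h (\<xi> + s *\<^sub>R e)" "\<lambda>s. h' (\<xi> + s *\<^sub>R e)"] t deriv by blast
  then have "\<bar>(h (\<xi> + t *\<^sub>R e) - h \<xi>) / t\<bar> = \<bar>h' (\<xi> + s *\<^sub>R e)\<bar>"
    using t by simp
  then show ?thesis
    using True B by (simp add: indicator_def)
next
  case False
  then have "R \<le> norm (\<xi> + t *\<^sub>R e)"
    using norm_triangle_ineq4[of "\<xi> + t *\<^sub>R e" "t *\<^sub>R e"] t e by simp
  then show ?thesis
    using False supp by (simp add: indicator_def)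
qed

lemma integral_directional_derivative_eq_0:
  fixes h h' :: "'a::euclidean_space \<Rightarrow> real"
  assumes h: "continuous_on UNIV h" and h': "continuous_on UNIV h'"
    and deriv: "\<And>\<xi> t. ((\<lambda>s. h (\<xi> + s *\<^sub>R e)) has_real_derivative h' (\<xi> + t *\<^sub>R e)) (at t)"
    and supp: "\<And>\<xi>. R \<le> norm \<xi> \<Longrightarrow> h \<xi> = 0 \<and> h' \<xi> = 0"
    and e: "norm e = 1"
  shows "integral\<^sup>L lborel h' = 0"
proof -
  obtain B where B: "\<And>\<xi>. \<bar>h' \<xi>\<bar> \<le> B"
    using continuous_compact_support_bounded[OF h', of R] supp by (metis real_norm_def)
  define t where "t n = inverse (real (Suc n))" for n
  have t: "0 < t n" "t n \<le> 1" for n by (auto simp: t_def field_simps)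
  define q where "q n \<xi> = (h (\<xi> + t n *\<^sub>R e) - h \<xi>) / t n" for n \<xi>
  have [measurable]: "h \<in> borel_measurable borel"
    using borel_measurable_continuous_onI[OF h] .
  have shift_integrable: "integrable lborel (\<lambda>\<xi>. h (\<xi> + c))" for c
    using integrable_translate_continuous_compact_support[OF h] supp by blast
  \<comment> \<open>each difference quotient integrates to 0 by translation invariance\<close>
  have "integral\<^sup>L lborel (q n) = 0" for n
    unfolding q_def using shift_integrable[of "t n *\<^sub>R e"] shift_integrable[of 0]
    by (simp add: integral_diff integral_lborel_translate)
  moreover have "(\<lambda>n. integral\<^sup>L lborel (q n)) \<longlonglongrightarrow> integral\<^sup>L lborel h'"
  proof (rule integral_dominated_convergence)
    show "integrable lborel (\<lambda>\<xi>. B * indicator (cball 0 (R + 1)) \<xi>)"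
      by (intro integrable_mult_right integrable_real_indicator emeasure_bounded_finite) auto
    show "h' \<in> borel_measurable lborel"
      using borel_measurable_continuous_onI[OF h'] by simp
    show "q n \<in> borel_measurable lborel" for n
      unfolding q_def by measurable
    show "AE \<xi> in lborel. norm (q n \<xi>) \<le> B * indicator (cball 0 (R + 1)) \<xi>" for n
      unfolding q_def real_norm_def using difference_quotient_bound[OF deriv B _ e t] supp by blast
    show "AE \<xi> in lborel. (\<lambda>n. q n \<xi>) \<longlonglongrightarrow> h' \<xi>"
    proof
      fix \<xi>
      have "((\<lambda>s. (h (\<xi> + (0 + s) *\<^sub>R e) - h (\<xi> + 0 *\<^sub>R e)) / s) \<longlongrightarrow> h' \<xi>) (at 0)"
        using DERIV_D[OF deriv[of \<xi> 0]] by simp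
      moreover have "filterlim t (at 0) sequentially"
        unfolding t_def by (rule filterlim_atI[OF LIMSEQ_inverse_real_of_nat]) auto
      ultimately have "(\<lambda>n. (h (\<xi> + (0 + t n) *\<^sub>R e) - h (\<xi> + 0 *\<^sub>R e)) / t n) \<longlonglongrightarrow> h' \<xi>"
        by (rule filterlim_compose)
      then show "(\<lambda>n. q n \<xi>) \<longlonglongrightarrow> h' \<xi>"
        by (simp add: q_def)
    qed
  qed
  ultimately show ?thesis
    by (simp add: LIMSEQ_const_iff)
qed

lemma integral_cis_directional_derivative:
  fixes g g' :: "'a::euclidean_space \<Rightarrow> real"
  assumes g: "continuous_on UNIV g" and g': "continuous_on UNIV g'"
    and deriv: "\<And>\<xi> t. ((\<lambda>s. g (\<xi> + s *\<^sub>R e)) has_real_derivative g' (\<xi> + t *\<^sub>R e)) (at t)"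
    and supp: "\<And>\<xi>. R \<le> norm \<xi> \<Longrightarrow> g \<xi> = 0 \<and> g' \<xi> = 0"
    and e: "norm e = 1"
  shows "(LINT \<xi>|lborel. of_real (g' \<xi>) * cis (z \<bullet> \<xi>)) =
    - \<i> * of_real (z \<bullet> e) * (LINT \<xi>|lborel. of_real (g \<xi>) * cis (z \<bullet> \<xi>))"
proof -
  define a where "a = z \<bullet> e"
  have supp_g: "\<And>\<xi>. R \<le> norm \<xi> \<Longrightarrow> g \<xi> = 0" and supp_g': "\<And>\<xi>. R \<le> norm \<xi> \<Longrightarrow> g' \<xi> = 0"
    using supp by auto
  have cos: "continuous_on UNIV (cos :: real \<Rightarrow> real)" and sin: "continuous_on UNIV (sin :: real \<Rightarrow> real)"
    by (auto intro!: continuous_intros)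
  have integrable: "integrable lborel (\<lambda>\<xi>. f \<xi> * w (z \<bullet> \<xi>))"
    if "continuous_on UNIV f" "\<And>\<xi>. R \<le> norm \<xi> \<Longrightarrow> f \<xi> = 0" "continuous_on UNIV w"
    for f :: "'a \<Rightarrow> real" and w :: "real \<Rightarrow> real"
    using that by (intro integrable_continuous_compact_support[of _ R])
      (auto intro!: continuous_intros continuous_on_compose2[OF that(3)])
  have line: "z \<bullet> (\<xi> + s *\<^sub>R e) = z \<bullet> \<xi> + s * a" for \<xi> s
    by (simp add: a_def inner_add_right)
  have "integral\<^sup>L lborel (\<lambda>\<xi>. g' \<xi> * cos (z \<bullet> \<xi>) - a * (g \<xi> * sin (z \<bullet> \<xi>))) = 0"
  proof (rule integral_directional_derivative_eq_0[where h="\<lambda>\<xi>. g \<xi> * cos (z \<bullet> \<xi>)" and e=e and R=R])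
    show "((\<lambda>s. g (\<xi> + s *\<^sub>R e) * cos (z \<bullet> (\<xi> + s *\<^sub>R e))) has_real_derivative
      g' (\<xi> + t *\<^sub>R e) * cos (z \<bullet> (\<xi> + t *\<^sub>R e)) - a * (g (\<xi> + t *\<^sub>R e) * sin (z \<bullet> (\<xi> + t *\<^sub>R e)))) (at t)"
      for \<xi> t
      unfolding line by (rule derivative_eq_intros deriv refl | simp add: algebra_simps)+
  qed (use g g' supp e in \<open>auto intro!: continuous_intros\<close>)
  then have re: "(LINT \<xi>|lborel. g' \<xi> * cos (z \<bullet> \<xi>)) = a * (LINT \<xi>|lborel. g \<xi> * sin (z \<bullet> \<xi>))"
    using integrable[OF g' supp_g' cos] integrable[OF g supp_g sin]
    by (simp add: integral_diff)
  have "integral\<^sup>L lborel (\<lambda>\<xi>. g' \<xi> * sin (z \<bullet> \<xi>) + a * (g \<xi> * cos (z \<bullet> \<xi>))) = 0"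
  proof (rule integral_directional_derivative_eq_0[where h="\<lambda>\<xi>. g \<xi> * sin (z \<bullet> \<xi>)" and e=e and R=R])
    show "((\<lambda>s. g (\<xi> + s *\<^sub>R e) * sin (z \<bullet> (\<xi> + s *\<^sub>R e))) has_real_derivative
      g' (\<xi> + t *\<^sub>R e) * sin (z \<bullet> (\<xi> + t *\<^sub>R e)) + a * (g (\<xi> + t *\<^sub>R e) * cos (z \<bullet> (\<xi> + t *\<^sub>R e)))) (at t)"
      for \<xi> t
      unfolding line by (rule derivative_eq_intros deriv refl | simp add: algebra_simps)+
  qed (use g g' supp e in \<open>auto intro!: continuous_intros\<close>)
  then have im: "(LINT \<xi>|lborel. g' \<xi> * sin (z \<bullet> \<xi>)) = - a * (LINT \<xi>|lborel. g \<xi> * cos (z \<bullet> \<xi>))"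
    using integrable[OF g' supp_g' sin] integrable[OF g supp_g cos]
    by (simp add: integral_add)
  have cis_int: "integrable lborel (\<lambda>\<xi>. of_real (f \<xi>) * cis (z \<bullet> \<xi>))"
    if "continuous_on UNIV f" "\<And>\<xi>. R \<le> norm \<xi> \<Longrightarrow> f \<xi> = 0" for f
    using that by (intro integrable_continuous_compact_support[of _ R]) (auto intro!: continuous_intros)
  have parts: "Re (LINT \<xi>|lborel. of_real (f \<xi>) * cis (z \<bullet> \<xi>)) = (LINT \<xi>|lborel. f \<xi> * cos (z \<bullet> \<xi>))"
    "Im (LINT \<xi>|lborel. of_real (f \<xi>) * cis (z \<bullet> \<xi>)) = (LINT \<xi>|lborel. f \<xi> * sin (z \<bullet> \<xi>))"
    if "continuous_on UNIV f" "\<And>\<xi>. R \<le> norm \<xi> \<Longrightarrow> f \<xi> = 0" for f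
    using integral_Re[OF cis_int[OF that]] integral_Im[OF cis_int[OF that]] by simp_all
  show ?thesis
    using re im by (intro complex_eqI) (simp_all add: parts[OF g supp_g] parts[OF g' supp_g'] a_def)
qed

definition derivs_along :: "real \<Rightarrow> 'a::euclidean_space \<Rightarrow> ('a \<Rightarrow> real) \<Rightarrow> (nat \<Rightarrow> 'a \<Rightarrow> real) \<Rightarrow> bool" where
  "derivs_along R e g G \<longleftrightarrow> G 0 = g \<and> (\<forall>j. continuous_on UNIV (G j)) \<and>
     (\<forall>j \<xi> t. ((\<lambda>s. G j (\<xi> + s *\<^sub>R e)) has_real_derivative G (Suc j) (\<xi> + t *\<^sub>R e)) (at t)) \<and>
     (\<forall>j \<xi>. R \<le> norm \<xi> \<longrightarrow> G j \<xi> = 0)"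

lemma derivs_along_diff:
  assumes "derivs_along R1 e g1 G1" "derivs_along R2 e g2 G2"
  shows "derivs_along (max R1 R2) e (\<lambda>\<xi>. g1 \<xi> - g2 \<xi>) (\<lambda>j \<xi>. G1 j \<xi> - G2 j \<xi>)"
  using assms unfolding derivs_along_def by (auto intro!: continuous_intros DERIV_diff)

lemma norm_fourier_integral_decay:
  assumes G: "derivs_along R e g G" and e: "norm e = 1"
  shows "\<bar>z \<bullet> e\<bar> ^ j * cmod (LINT \<xi>|lborel. of_real (g \<xi>) * cis (z \<bullet> \<xi>)) \<le> (LINT \<xi>|lborel. \<bar>G j \<xi>\<bar>)"
proof -
  have "(LINT \<xi>|lborel. of_real (G j \<xi>) * cis (z \<bullet> \<xi>)) =
      (- \<i> * of_real (z \<bullet> e)) ^ j * (LINT \<xi>|lborel. of_real (g \<xi>) * cis (z \<bullet> \<xi>))"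
  proof (induction j)
    case 0
    then show ?case using G by (simp add: derivs_along_def)
  next
    case (Suc j)
    have "(LINT \<xi>|lborel. of_real (G (Suc j) \<xi>) * cis (z \<bullet> \<xi>)) =
        - \<i> * of_real (z \<bullet> e) * (LINT \<xi>|lborel. of_real (G j \<xi>) * cis (z \<bullet> \<xi>))"
      using G e unfolding derivs_along_def by (intro integral_cis_directional_derivative[where R=R]) auto
    then show ?case by (simp add: Suc.IH)
  qed
  then have "\<bar>z \<bullet> e\<bar> ^ j * cmod (LINT \<xi>|lborel. of_real (g \<xi>) * cis (z \<bullet> \<xi>)) =
      cmod (LINT \<xi>|lborel. of_real (G j \<xi>) * cis (z \<bullet> \<xi>))"
    by (simp add: norm_mult norm_power)
  also have "\<dots> \<le> (LINT \<xi>|lborel. \<bar>G j \<xi>\<bar>)"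
    using integral_norm_bound[of lborel "\<lambda>\<xi>. of_real (G j \<xi>) * cis (z \<bullet> \<xi>)"] by (simp add: norm_mult)
  finally show ?thesis .
qed

lemma smooth3_derivatives_vanish:
  assumes "smooth3 \<phi>" and supp: "\<And>\<xi>. r \<le> norm \<xi> \<Longrightarrow> \<phi> \<xi> = 0"
  obtains F where "F [] = \<phi>" and "\<And>ds x. (F ds has_derivative (\<lambda>h. F (h # ds) x)) (at x)"
    and "\<And>ds x. r < norm x \<Longrightarrow> F ds x = 0"
proof -
  obtain F :: "(real^3) list \<Rightarrow> real^3 \<Rightarrow> real" where F0: "F [] = \<phi>"
    and F': "\<And>ds x. (F ds has_derivative (\<lambda>h. F (h # ds) x)) (at x)"
    using assms(1) unfolding smooth3_def by blast
  have "F ds x = 0" if "r < norm x" for ds x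
    using that
  proof (induction ds arbitrary: x)
    case Nil
    then show ?case using F0 supp by simp
  next
    case (Cons h ds)
    have "open {x::real^3. r < norm x}"
      by (intro open_Collect_less continuous_intros)
    then have "(F ds has_derivative (\<lambda>h. 0)) (at x)"
      by (rule has_derivative_transform_within_open[OF has_derivative_const])
        (use Cons in auto)
    then have "(\<lambda>h. F (h # ds) x) = (\<lambda>h. 0)"
      by (rule has_derivative_unique[OF F'])
    then show ?case by (metis (no_types))
  qed
  with F0 F' show ?thesis by (rule that)
qed

lemma derivs_along_scaled:
  assumes "smooth3 \<phi>" and supp: "\<And>\<xi>. r \<le> norm \<xi> \<Longrightarrow> \<phi> \<xi> = 0" and c: "c > 0"
  obtains G where "derivs_along ((r + 1) / c) e (\<lambda>\<xi>. \<phi> (c *\<^sub>R \<xi>)) G"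
proof -
  obtain F :: "(real^3) list \<Rightarrow> real^3 \<Rightarrow> real" where F0: "F [] = \<phi>"
    and F': "\<And>ds x. (F ds has_derivative (\<lambda>h. F (h # ds) x)) (at x)"
    and F_vanish: "\<And>ds x. r < norm x \<Longrightarrow> F ds x = 0"
    using smooth3_derivatives_vanish[OF assms(1) supp] by blast
  define G where "G j \<xi> = c ^ j * F (replicate j e) (c *\<^sub>R \<xi>)" for j \<xi>
  have F_cont: "continuous_on UNIV (F ds)" for ds
    by (rule continuous_at_imp_continuous_on) (use has_derivative_continuous[OF F'] in auto)
  have "((\<lambda>s. G j (\<xi> + s *\<^sub>R e)) has_real_derivative G (Suc j) (\<xi> + t *\<^sub>R e)) (at t)" for j \<xi> t
  proof -
    define ds where "ds = replicate j e"
    define p where "p = c *\<^sub>R (\<xi> + t *\<^sub>R e)"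
    have "linear (\<lambda>h. F (h # ds) p)"
      using has_derivative_linear[OF F'[of ds p]] .
    then have chain: "F (((h * c) *\<^sub>R e) # ds) p = (c * F (e # ds) p) * h" for h
      using linear_scale[of "\<lambda>h. F (h # ds) p" "h * c" e] by (simp add: algebra_simps)
    have "((\<lambda>s. c *\<^sub>R (\<xi> + s *\<^sub>R e)) has_derivative (\<lambda>h. h *\<^sub>R (c *\<^sub>R e))) (at t)"
      by (rule derivative_eq_intros refl | simp add: algebra_simps)+
    from has_derivative_compose[OF this F'[of ds p, unfolded p_def]]
    have "((\<lambda>s. F ds (c *\<^sub>R (\<xi> + s *\<^sub>R e))) has_real_derivative (c * F (e # ds) p)) (at t)"
      using chain unfolding p_def by (simp add: has_field_derivative_def)
    from DERIV_cmult[OF this, of "c ^ j"] show ?thesis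
      unfolding G_def ds_def p_def by (simp add: algebra_simps)
  qed
  moreover have "G j \<xi> = 0" if "(r + 1) / c \<le> norm \<xi>" for j \<xi>
  proof -
    have "r < norm (c *\<^sub>R \<xi>)" using that c by (simp add: field_simps)
    then show ?thesis unfolding G_def using F_vanish by simp
  qed
  moreover have "continuous_on UNIV (G j)" for j
    unfolding G_def by (intro continuous_intros continuous_on_compose2[OF F_cont]) auto
  ultimately have "derivs_along ((r + 1) / c) e (\<lambda>\<xi>. \<phi> (c *\<^sub>R \<xi>)) G"
    unfolding derivs_along_def by (simp add: G_def F0 fun_eq_iff)
  then show ?thesis by (rule that)
qed

lemma derivs_along_psi:
  assumes "smooth3 \<phi>" and "\<And>\<xi>. r \<le> norm \<xi> \<Longrightarrow> \<phi> \<xi> = 0" and "M > 0"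
  obtains R G where "derivs_along R e (psi \<phi> M) G"
proof (cases "M = 1")
  case True
  obtain G where G: "derivs_along ((r + 1) / 1) e (\<lambda>\<xi>. \<phi> (1 *\<^sub>R \<xi>)) G"
    by (rule derivs_along_scaled[OF assms(1), where r=r and c=1 and e=e]) (use assms(2) in auto)
  have "(\<lambda>\<xi>. \<phi> (1 *\<^sub>R \<xi>)) = psi \<phi> M"
    using True by (simp add: psi_def fun_eq_iff)
  from G[unfolded this] show ?thesis by (rule that)
next
  case False
  obtain G1 where G1: "derivs_along ((r + 1) / (1 / M)) e (\<lambda>\<xi>. \<phi> ((1 / M) *\<^sub>R \<xi>)) G1"
    by (rule derivs_along_scaled[OF assms(1), where r=r and c="1 / M" and e=e]) (use assms(2,3) in auto)
  obtain G2 where G2: "derivs_along ((r + 1) / (2 / M)) e (\<lambda>\<xi>. \<phi> ((2 / M) *\<^sub>R \<xi>)) G2"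
    by (rule derivs_along_scaled[OF assms(1), where r=r and c="2 / M" and e=e]) (use assms(2,3) in auto)
  have "(\<lambda>\<xi>. \<phi> ((1 / M) *\<^sub>R \<xi>) - \<phi> ((2 / M) *\<^sub>R \<xi>)) = psi \<phi> M"
    using False by (simp add: psi_def fun_eq_iff)
  from derivs_along_diff[OF G1 G2, unfolded this] show ?thesis by (rule that)
qed

definition cube :: "nat \<Rightarrow> (real^3) set" where
  "cube n = cbox (- ((2::real) ^ n *\<^sub>R One)) ((2::real) ^ n *\<^sub>R One)"

lemma mem_cube: "z \<in> cube n \<longleftrightarrow> (\<forall>b\<in>Basis. \<bar>z \<bullet> b\<bar> \<le> 2 ^ n)"
  unfolding cube_def mem_box by (auto simp: abs_le_iff)

lemma emeasure_cube: "emeasure lborel (cube n) = ennreal (8 * 8 ^ n)"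
proof -
  have e: "((2::real) ^ n *\<^sub>R One - - (2 ^ n *\<^sub>R One)) \<bullet> b = 2 * 2 ^ n" if "b \<in> (Basis::(real^3) set)" for b
    by (simp only: inner_diff_left inner_minus_left inner_scaleR_left inner_sum_Basis[OF that])
  have cond: "\<forall>b\<in>(Basis::(real^3) set). (- ((2::real) ^ n *\<^sub>R One)) \<bullet> b \<le> (2 ^ n *\<^sub>R One) \<bullet> b"
    by (simp only: inner_minus_left inner_scaleR_left) simp
  have "emeasure lborel (cube n) = ennreal (\<Prod>b\<in>(Basis::(real^3) set). ((2::real) ^ n *\<^sub>R One - - (2 ^ n *\<^sub>R One)) \<bullet> b)"
    unfolding cube_def emeasure_lborel_cbox_eq by (subst if_P[OF cond]) (rule refl)
  also have "(\<Prod>b\<in>(Basis::(real^3) set). ((2::real) ^ n *\<^sub>R One - - (2 ^ n *\<^sub>R One)) \<bullet> b) = (\<Prod>b\<in>(Basis::(real^3) set). 2 * 2 ^ n)"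
    by (rule prod.cong[OF refl e])
  also have "(\<Prod>b\<in>(Basis::(real^3) set). (2::real) * 2 ^ n) = (2 * 2 ^ n) ^ 3"
    by (simp only: prod_constant) simp
  also have "(2 * 2 ^ n :: real) ^ 3 = 8 * 8 ^ n"
  proof -
    have "((2::real) ^ n) ^ 3 = (2 ^ 3) ^ n" by (simp only: power_mult[symmetric] mult.commute)
    then show ?thesis by (simp add: power_mult_distrib)
  qed
  finally show ?thesis .
qed

lemma le_of_quartic_decay_outside_cube:
  assumes decay: "\<And>b. b \<in> Basis \<Longrightarrow> (z \<bullet> b) ^ 4 * k \<le> A" and A: "A \<ge> 0" and z: "z \<notin> cube m"
  shows "k \<le> A / 16 ^ m"
proof (cases "k \<le> 0")
  case False
  obtain b where b: "b \<in> Basis" "2 ^ m < \<bar>z \<bullet> b\<bar>"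
    using z unfolding mem_cube by (auto simp: not_le)
  have "((2::real) ^ m) ^ 4 = (2 ^ 4) ^ m"
    by (simp only: power_mult[symmetric] mult.commute)
  then have "(16::real) ^ m = (2 ^ m) ^ 4"
    by simp
  also have "\<dots> < \<bar>z \<bullet> b\<bar> ^ 4"
    using b(2) by (intro power_strict_mono) auto
  finally have "16 ^ m * k \<le> (z \<bullet> b) ^ 4 * k"
    using False by (intro mult_right_mono) (auto simp: power_even_abs)
  then show ?thesis
    using decay[OF b(1)] by (simp add: field_simps)
next
  case True
  moreover have "0 \<le> A / 16 ^ m" using A by simp
  ultimately show ?thesis by linarith
qed

lemma quartic_decay_cube_bound:
  fixes z :: "real^3"
  assumes A: "A \<ge> 0" and bound: "k \<le> A" and decay: "\<And>b. b \<in> Basis \<Longrightarrow> (z \<bullet> b) ^ 4 * k \<le> A"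
  obtains n where "z \<in> cube n" and "k \<le> A * 16 / 16 ^ n"
proof -
  obtain N :: nat where "norm z < 2 ^ N"
    using real_arch_pow[of 2 "norm z"] by auto
  then have "z \<in> cube N"
    unfolding mem_cube using Basis_le_norm[of _ z] by fastforce
  define n where "n = (LEAST n. z \<in> cube n)"
  have "z \<in> cube n"
    unfolding n_def by (rule LeastI[of "\<lambda>n. z \<in> cube n", OF \<open>z \<in> cube N\<close>])
  moreover have "k \<le> A * 16 / 16 ^ n"
  proof (cases n)
    case 0
    then show ?thesis using bound A by simp
  next
    case (Suc m)
    then have "z \<notin> cube m"
      using not_less_Least[of m "\<lambda>n. z \<in> cube n"] unfolding n_def by auto
    then show ?thesis
      using le_of_quartic_decay_outside_cube[OF decay A] Suc by simp
  qed
  ultimately show ?thesis by (rule that)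
qed

lemma nn_integral_finite_of_quartic_decay:
  fixes k :: "real^3 \<Rightarrow> real"
  assumes A: "A \<ge> 0" and bound: "\<And>z. k z \<le> A"
    and decay: "\<And>z b. b \<in> Basis \<Longrightarrow> (z \<bullet> b) ^ 4 * k z \<le> A"
  shows "(\<integral>\<^sup>+ z. ennreal (k z) \<partial>lborel) < \<infinity>"
proof -
  define c where "c n = A * 16 / 16 ^ n" for n :: nat
  define w where "w z = (\<Sum>n. ennreal (c n) * indicator (cube n) z)" for z
  have "ennreal (k z) \<le> w z" for z
  proof -
    obtain n where z: "z \<in> cube n" and "k z \<le> c n"
      using quartic_decay_cube_bound[OF A bound decay] unfolding c_def by blast
    then have "ennreal (k z) \<le> ennreal (c n) * indicator (cube n) z"
      using z by (simp add: ennreal_leI)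
    also have "\<dots> \<le> w z"
    proof -
      define f where "f i = ennreal (c i) * indicator (cube i) z" for i
      have "sum f {n} \<le> suminf f"
        by (rule sum_le_suminf) (auto simp: summableI)
      then show ?thesis unfolding w_def f_def[symmetric] by simp
    qed
    finally show ?thesis .
  qed
  then have "(\<integral>\<^sup>+ z. ennreal (k z) \<partial>lborel) \<le> (\<integral>\<^sup>+ z. w z \<partial>lborel)"
    by (intro nn_integral_mono)
  also have "\<dots> = (\<Sum>n. \<integral>\<^sup>+ z. ennreal (c n) * indicator (cube n) z \<partial>lborel)"
    unfolding w_def by (rule nn_integral_suminf) (auto simp: cube_def)
  also have "\<dots> = (\<Sum>n. ennreal (c n) * ennreal (8 * 8 ^ n))"
    by (subst nn_integral_cmult_indicator) (auto simp: cube_def emeasure_cube[unfolded cube_def])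
  also have "\<dots> = (\<Sum>n. ennreal (128 * A * (1 / 2) ^ n))"
  proof (intro suminf_cong)
    fix n
    have eq: "c n * (8 * 8 ^ n) = 128 * A * (1 / 2) ^ n"
      by (simp add: c_def field_simps flip: power_mult_distrib)
    have "ennreal (c n) * ennreal (8 * 8 ^ n) = ennreal (c n * (8 * 8 ^ n))"
      by (rule ennreal_mult''[symmetric]) simp
    then show "ennreal (c n) * ennreal (8 * 8 ^ n) = ennreal (128 * A * (1 / 2) ^ n)"
      unfolding eq .
  qed
  also have "\<dots> < \<infinity>"
  proof -
    have "summable (\<lambda>n. 128 * A * (1 / 2::real) ^ n)"
      by (intro summable_mult summable_geometric) simp
    then have "(\<Sum>n. ennreal (128 * A * (1 / 2) ^ n)) \<noteq> top"
      by (rule ennreal_suminf_neq_top) (use A in simp)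
    then show ?thesis by (simp add: less_top[symmetric])
  qed
  finally show ?thesis .
qed

definition bounded_integrable_kernel :: "(real^3 \<Rightarrow> complex) \<Rightarrow> bool" where
  "bounded_integrable_kernel K \<longleftrightarrow> K \<in> borel_measurable borel \<and> (\<exists>C. \<forall>z. cmod (K z) \<le> C) \<and>
     (\<integral>\<^sup>+ z. ennreal (cmod (K z)) \<partial>lborel) < \<infinity>"

lemma borel_measurable_fourier_integral:
  fixes g :: "'a::euclidean_space \<Rightarrow> real"
  assumes "continuous_on UNIV g"
  shows "(\<lambda>z. LINT \<xi>|lborel. of_real (g \<xi>) * cis (z \<bullet> \<xi>)) \<in> borel_measurable borel"
proof -
  have "continuous_on UNIV (\<lambda>p::'a \<times> 'a. of_real (g (snd p)) * cis (fst p \<bullet> snd p))"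
    by (intro continuous_intros continuous_on_compose2[OF assms]) auto
  then have "(\<lambda>(z, \<xi>). of_real (g \<xi>) * cis (z \<bullet> \<xi>)) \<in> borel_measurable (lborel \<Otimes>\<^sub>M lborel)"
    using borel_measurable_continuous_onI by (simp add: lborel_prod case_prod_beta')
  then show ?thesis
    using lborel.borel_measurable_lebesgue_integral by fastforce
qed

lemma fourier_integral_psi_decay:
  assumes "smooth3 \<phi>" and "\<And>\<xi>. r \<le> norm \<xi> \<Longrightarrow> \<phi> \<xi> = 0" and "M > 0"
  obtains A where "A \<ge> 0"
    and "\<And>z. cmod (LINT \<xi>|lborel. of_real (psi \<phi> M \<xi>) * cis (z \<bullet> \<xi>)) \<le> A"
    and "\<And>z b. b \<in> Basis \<Longrightarrow> (z \<bullet> b) ^ 4 * cmod (LINT \<xi>|lborel. of_real (psi \<phi> M \<xi>) * cis (z \<bullet> \<xi>)) \<le> A"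
proof -
  define I where "I z = (LINT \<xi>|lborel. of_real (psi \<phi> M \<xi>) * cis (z \<bullet> \<xi>))" for z :: "real^3"
  have decay: "\<exists>A\<ge>0. \<forall>z. \<bar>z \<bullet> e\<bar> ^ j * cmod (I z) \<le> A" if "norm e = 1" for e :: "real^3" and j
  proof -
    obtain R G where G: "derivs_along R e (psi \<phi> M) G"
      using derivs_along_psi[OF assms] by metis
    show ?thesis
      using norm_fourier_integral_decay[OF G that] unfolding I_def
      by (intro exI[of _ "LINT \<xi>|lborel. \<bar>G j \<xi>\<bar>"]) (auto intro: integral_nonneg_AE)
  qed
  obtain b0 :: "real^3" where "b0 \<in> Basis" using nonempty_Basis by blast
  then obtain A0 where A0: "A0 \<ge> 0" "\<And>z. cmod (I z) \<le> A0"
    using decay[of b0 0] norm_Basis by auto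
  have "\<forall>b\<in>Basis. \<exists>A\<ge>0. \<forall>z. \<bar>z \<bullet> b\<bar> ^ 4 * cmod (I z) \<le> A"
    using decay norm_Basis by blast
  then obtain A4 where A4: "\<And>b. b \<in> Basis \<Longrightarrow> A4 b \<ge> 0 \<and> (\<forall>z. \<bar>z \<bullet> b\<bar> ^ 4 * cmod (I z) \<le> A4 b)"
    by metis
  show ?thesis
  proof (rule that[of "A0 + sum A4 Basis", folded I_def])
    show "0 \<le> A0 + sum A4 Basis" and "cmod (I z) \<le> A0 + sum A4 Basis" for z
      using A0 A4 by (auto intro: sum_nonneg add_increasing2)
    show "(z \<bullet> b) ^ 4 * cmod (I z) \<le> A0 + sum A4 Basis" if "b \<in> Basis" for z b
    proof -
      have "A4 b \<le> sum A4 Basis"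
        using A4 that by (intro member_le_sum) auto
      then show ?thesis
        using A0 A4[OF that] by (simp add: power_even_abs) (meson add_increasing order_trans)
    qed
  qed
qed

lemma bounded_integrable_LP_kernel:
  assumes "smooth3 \<phi>" and "\<And>\<xi>. r \<le> norm \<xi> \<Longrightarrow> \<phi> \<xi> = 0" and "M > 0"
  shows "bounded_integrable_kernel (LP_kernel \<phi> M)"
proof -
  define I where "I z = (LINT \<xi>|lborel. of_real (psi \<phi> M \<xi>) * cis (z \<bullet> \<xi>))" for z :: "real^3"
  define \<kappa> :: real where "\<kappa> = 1 / (2 * pi) ^ 3"
  have \<kappa>: "\<kappa> > 0" by (simp add: \<kappa>_def)
  have K: "LP_kernel \<phi> M = (\<lambda>z. of_real \<kappa> * I z)"
    by (simp add: LP_kernel_def I_def \<kappa>_def fun_eq_iff)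
  have norm_K: "cmod (of_real \<kappa> * I z) = \<kappa> * cmod (I z)" for z
    using \<kappa> by (simp add: norm_mult)
  obtain A where A: "A \<ge> 0" "\<And>z. cmod (I z) \<le> A" "\<And>z b. b \<in> Basis \<Longrightarrow> (z \<bullet> b) ^ 4 * cmod (I z) \<le> A"
    using fourier_integral_psi_decay[OF assms] unfolding I_def by blast
  obtain R G where "derivs_along R 0 (psi \<phi> M) G"
    using derivs_along_psi[OF assms] by metis
  then have "continuous_on UNIV (psi \<phi> M)"
    unfolding derivs_along_def by metis
  then have "I \<in> borel_measurable borel"
    unfolding I_def[abs_def] by (rule borel_measurable_fourier_integral)
  moreover have "(\<integral>\<^sup>+ z. ennreal (\<kappa> * cmod (I z)) \<partial>lborel) < \<infinity>"
  proof (rule nn_integral_finite_of_quartic_decay)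
    show "0 \<le> \<kappa> * A" and "\<kappa> * cmod (I z) \<le> \<kappa> * A" for z
      using \<kappa> A(1,2) by (auto intro: mult_left_mono)
    show "(z \<bullet> b) ^ 4 * (\<kappa> * cmod (I z)) \<le> \<kappa> * A" if "b \<in> Basis" for z b
      using mult_left_mono[OF A(3)[OF that], of \<kappa>] \<kappa> by (simp add: mult.left_commute)
  qed
  moreover have "cmod (of_real \<kappa> * I z) \<le> \<kappa> * A" for z
    unfolding norm_K using \<kappa> A(2)[of z] by (intro mult_left_mono) auto
  ultimately show ?thesis
    unfolding bounded_integrable_kernel_def K norm_K by auto
qed

section \<open>Square-integrable functions and convolution\<close>

lemma nn_integral_lborel_reflect:
  fixes h :: "'a::euclidean_space \<Rightarrow> ennreal"
  assumes [measurable]: "h \<in> borel_measurable borel"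
  shows "(\<integral>\<^sup>+ y. h (x - y) \<partial>lborel) = (\<integral>\<^sup>+ y. h y \<partial>lborel)"
proof -
  have "lborel = distr lborel borel (\<lambda>z::'a. x - z)"
    using lborel_affine[of "-1" x] by (simp add: density_1)
  then have "(\<integral>\<^sup>+ y. h y \<partial>lborel) = (\<integral>\<^sup>+ y. h y \<partial>(distr lborel borel (\<lambda>z. x - z)))"
    by simp
  also have "\<dots> = (\<integral>\<^sup>+ y. h (x - y) \<partial>lborel)"
    by (rule nn_integral_distr) auto
  finally show ?thesis by simp
qed

lemma nn_integral_lborel_translate:
  fixes h :: "'a::euclidean_space \<Rightarrow> ennreal"
  assumes [measurable]: "h \<in> borel_measurable borel"
  shows "(\<integral>\<^sup>+ x. h (x - y) \<partial>lborel) = (\<integral>\<^sup>+ y. h y \<partial>lborel)"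
proof -
  have "(\<integral>\<^sup>+ y. h y \<partial>lborel) = (\<integral>\<^sup>+ y. h y \<partial>(distr lborel borel ((+) (-y))))"
    by (simp add: lborel_distr_plus)
  also have "\<dots> = (\<integral>\<^sup>+ x. h (- y + x) \<partial>lborel)"
    by (rule nn_integral_distr) auto
  finally show ?thesis by simp
qed

definition ennreal_sqrt :: "ennreal \<Rightarrow> ennreal" where
  "ennreal_sqrt I = (if I = \<infinity> then \<infinity> else ennreal (sqrt (enn2real I)))"

lemma ennreal_sqrt_power2: "ennreal_sqrt I ^ 2 = I"
  by (cases I) (auto simp: ennreal_sqrt_def ennreal_power)

lemma ennreal_sqrt_of_power2: "ennreal_sqrt (x ^ 2) = x"
  by (cases x) (auto simp: ennreal_sqrt_def ennreal_power)

lemma ennreal_sqrt_mono: "I \<le> J \<Longrightarrow> ennreal_sqrt I \<le> ennreal_sqrt J"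
  by (cases I; cases J) (auto simp: ennreal_sqrt_def top_unique)

lemma ennreal_sqrt_ennreal: "0 \<le> r \<Longrightarrow> ennreal_sqrt (ennreal r) = ennreal (sqrt r)"
  by (simp add: ennreal_sqrt_def)

lemma Minkowski_nn_integral_L2:
  fixes f g h :: "'a \<Rightarrow> ennreal"
  assumes [measurable]: "f \<in> borel_measurable M" "g \<in> borel_measurable M" "h \<in> borel_measurable M"
    and le: "AE x in M. f x \<le> g x + h x"
  shows "ennreal_sqrt (\<integral>\<^sup>+ x. f x ^ 2 \<partial>M) \<le>
    ennreal_sqrt (\<integral>\<^sup>+ x. g x ^ 2 \<partial>M) + ennreal_sqrt (\<integral>\<^sup>+ x. h x ^ 2 \<partial>M)"
proof -
  define p where "p = ennreal_sqrt (\<integral>\<^sup>+ x. g x ^ 2 \<partial>M)"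
  define q where "q = ennreal_sqrt (\<integral>\<^sup>+ x. h x ^ 2 \<partial>M)"
  have "(\<integral>\<^sup>+ x. g x * h x \<partial>M) ^ 2 \<le> (p * q) ^ 2"
    unfolding p_def q_def power_mult_distrib ennreal_sqrt_power2
    by (rule Cauchy_Schwarz_nn_integral) auto
  then have Cauchy_Schwarz: "(\<integral>\<^sup>+ x. g x * h x \<partial>M) \<le> p * q"
    using ennreal_sqrt_mono by (metis ennreal_sqrt_of_power2)
  have "(\<integral>\<^sup>+ x. f x ^ 2 \<partial>M) \<le> (\<integral>\<^sup>+ x. (g x + h x) ^ 2 \<partial>M)"
    using le by (intro nn_integral_mono_AE) (auto elim: eventually_mono intro: power_mono_ennreal)
  also have "\<dots> = (\<integral>\<^sup>+ x. g x ^ 2 + h x ^ 2 + 2 * g x * h x \<partial>M)"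
    by (intro nn_integral_cong) (rule power2_sum)
  also have "\<dots> = (\<integral>\<^sup>+ x. g x ^ 2 \<partial>M) + (\<integral>\<^sup>+ x. h x ^ 2 \<partial>M) + 2 * (\<integral>\<^sup>+ x. g x * h x \<partial>M)"
    by (simp add: nn_integral_add nn_integral_cmult mult.assoc)
  also have "\<dots> \<le> p ^ 2 + q ^ 2 + 2 * (p * q)"
    unfolding p_def q_def ennreal_sqrt_power2 using Cauchy_Schwarz[unfolded p_def q_def]
    by (intro add_mono mult_left_mono) auto
  also have "\<dots> = (p + q) ^ 2" by (simp add: power2_sum mult.assoc)
  finally show ?thesis
    using ennreal_sqrt_mono by (metis ennreal_sqrt_of_power2 p_def q_def)
qed

lemma sq_int_iff_nn_integral:
  "sq_int f \<longleftrightarrow> f \<in> borel_measurable lborel \<and> (\<integral>\<^sup>+ x. ennreal (cmod (f x)) ^ 2 \<partial>lborel) < \<infinity>"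
proof -
  have "(\<integral>\<^sup>+ x. ennreal (norm ((cmod (f x))\<^sup>2)) \<partial>lborel) = (\<integral>\<^sup>+ x. ennreal (cmod (f x)) ^ 2 \<partial>lborel)"
    by (intro nn_integral_cong) (simp add: ennreal_power)
  then show ?thesis
    unfolding sq_int_def integrable_iff_bounded by auto
qed

lemma sq_int_zero: "sq_int (\<lambda>y. 0)"
  unfolding sq_int_iff_nn_integral by simp

lemma sq_int_lin:
  assumes "sq_int a" "sq_int b"
  shows "sq_int (\<lambda>y. c * a y + b y)"
proof -
  have [measurable]: "a \<in> borel_measurable lborel" "b \<in> borel_measurable lborel"
    and a2: "integrable lborel (\<lambda>y. (cmod (a y))\<^sup>2)" and b2: "integrable lborel (\<lambda>y. (cmod (b y))\<^sup>2)"
    using assms unfolding sq_int_def by auto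
  have bound_int: "integrable lborel (\<lambda>y. 2 * (cmod c)\<^sup>2 * (cmod (a y))\<^sup>2 + 2 * (cmod (b y))\<^sup>2)"
    using a2 b2 by (intro Bochner_Integration.integrable_add integrable_mult_right)
  have pointwise: "(cmod (c * a y + b y))\<^sup>2 \<le> 2 * (cmod c)\<^sup>2 * (cmod (a y))\<^sup>2 + 2 * (cmod (b y))\<^sup>2" for y
  proof -
    have "cmod (c * a y + b y) \<le> cmod c * cmod (a y) + cmod (b y)"
      using norm_triangle_ineq[of "c * a y" "b y"] by (simp add: norm_mult)
    then have "(cmod (c * a y + b y))\<^sup>2 \<le> (cmod c * cmod (a y) + cmod (b y))\<^sup>2"
      by (intro power_mono) auto
    also have "\<dots> \<le> 2 * (cmod c * cmod (a y))\<^sup>2 + 2 * (cmod (b y))\<^sup>2"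
      using sum_squares_bound[of "cmod c * cmod (a y)" "cmod (b y)"] by (simp add: power2_sum)
    finally show ?thesis by (simp add: power_mult_distrib)
  qed
  have "integrable lborel (\<lambda>y. (cmod (c * a y + b y))\<^sup>2)"
    by (rule Bochner_Integration.integrable_bound[OF bound_int]) (use pointwise in auto)
  then show ?thesis
    unfolding sq_int_def by simp
qed

lemma sq_int_add: "sq_int a \<Longrightarrow> sq_int b \<Longrightarrow> sq_int (\<lambda>y. a y + b y)"
  using sq_int_lin[of a b 1] by simp

lemma sq_int_diff: "sq_int a \<Longrightarrow> sq_int b \<Longrightarrow> sq_int (\<lambda>y. a y - b y)"
  using sq_int_lin[of b a "-1"] by simp

lemma L2x_eq_ennreal_sqrt:
  assumes "sq_int p"
  shows "ennreal (L2x p) = ennreal_sqrt (\<integral>\<^sup>+ x. ennreal (cmod (p x)) ^ 2 \<partial>lborel)"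
proof -
  have "integrable lborel (\<lambda>x. (cmod (p x))\<^sup>2)"
    using assms unfolding sq_int_def by auto
  then have "(\<integral>\<^sup>+ x. ennreal ((cmod (p x))\<^sup>2) \<partial>lborel) = ennreal (LINT x|lborel. (cmod (p x))\<^sup>2)"
    by (rule nn_integral_eq_integral) auto
  then show ?thesis
    unfolding L2x_def by (simp add: ennreal_sqrt_ennreal ennreal_power)
qed

lemma L2x_nonneg: "L2x p \<ge> 0"
  unfolding L2x_def by simp

lemma L2x_uminus: "L2x (\<lambda>x. - p x) = L2x p"
  unfolding L2x_def by simp

lemma L2x_triangle:
  assumes p: "sq_int p" and q: "sq_int q"
  shows "L2x (\<lambda>x. p x + q x) \<le> L2x p + L2x q"
proof -
  have [measurable]: "p \<in> borel_measurable lborel" "q \<in> borel_measurable lborel"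
    using p q unfolding sq_int_def by auto
  have "ennreal (L2x (\<lambda>x. p x + q x)) \<le> ennreal (L2x p) + ennreal (L2x q)"
    unfolding L2x_eq_ennreal_sqrt[OF p] L2x_eq_ennreal_sqrt[OF q] L2x_eq_ennreal_sqrt[OF sq_int_add[OF p q]]
    by (rule Minkowski_nn_integral_L2) (auto intro!: ennreal_leI norm_triangle_ineq simp flip: ennreal_plus)
  then show ?thesis
    by (simp add: L2x_nonneg flip: ennreal_plus)
qed

context
  fixes K :: "real^3 \<Rightarrow> complex"
  assumes K: "bounded_integrable_kernel K"
begin

lemma kernel_measurable [measurable]: "K \<in> borel_measurable borel"
  using K unfolding bounded_integrable_kernel_def by blast

lemma kernel_nn_integral_finite: "(\<integral>\<^sup>+ z. ennreal (cmod (K z)) \<partial>lborel) < \<infinity>"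
  using K unfolding bounded_integrable_kernel_def by blast

lemma kernel_square_nn_integral_finite: "(\<integral>\<^sup>+ z. ennreal (cmod (K z)) ^ 2 \<partial>lborel) < \<infinity>"
proof -
  obtain C where C: "\<And>z. cmod (K z) \<le> C"
    using K unfolding bounded_integrable_kernel_def by blast
  then have "C \<ge> 0" using norm_ge_zero order_trans by blast
  have "(\<integral>\<^sup>+ z. ennreal (cmod (K z)) ^ 2 \<partial>lborel) \<le> (\<integral>\<^sup>+ z. ennreal C * ennreal (cmod (K z)) \<partial>lborel)"
  proof (intro nn_integral_mono)
    fix z
    have "ennreal (cmod (K z) * cmod (K z)) \<le> ennreal (C * cmod (K z))"
      using C[of z] by (intro ennreal_leI mult_right_mono) auto
    then show "ennreal (cmod (K z)) ^ 2 \<le> ennreal C * ennreal (cmod (K z))"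
      using \<open>C \<ge> 0\<close> by (simp add: power2_eq_square ennreal_mult)
  qed
  also have "\<dots> = ennreal C * (\<integral>\<^sup>+ z. ennreal (cmod (K z)) \<partial>lborel)"
    by (simp add: nn_integral_cmult)
  also have "\<dots> < \<infinity>"
    using kernel_nn_integral_finite by (simp add: ennreal_mult_less_top less_top)
  finally show ?thesis .
qed

lemma integrable_conv_sq_int:
  assumes "sq_int f"
  shows "integrable lborel (\<lambda>y. K (x - y) * f y)"
proof -
  have [measurable]: "f \<in> borel_measurable lborel"
    and f2: "(\<integral>\<^sup>+ y. ennreal (cmod (f y)) ^ 2 \<partial>lborel) < \<infinity>"
    using assms unfolding sq_int_iff_nn_integral by auto
  have "ennreal (a * b) \<le> ennreal a ^ 2 + ennreal b ^ 2" if "0 \<le> a" "0 \<le> b" for a b :: real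
  proof -
    have "a * b \<le> a\<^sup>2 + b\<^sup>2"
      using sum_squares_bound[of a b] mult_nonneg_nonneg[OF that] by linarith
    then show ?thesis
      using that by (simp add: ennreal_leI ennreal_power flip: ennreal_plus)
  qed
  then have "(\<integral>\<^sup>+ y. ennreal (norm (K (x - y) * f y)) \<partial>lborel)
      \<le> (\<integral>\<^sup>+ y. ennreal (cmod (K (x - y))) ^ 2 + ennreal (cmod (f y)) ^ 2 \<partial>lborel)"
    by (intro nn_integral_mono) (simp add: norm_mult)
  also have "\<dots> = (\<integral>\<^sup>+ y. ennreal (cmod (K y)) ^ 2 \<partial>lborel) + (\<integral>\<^sup>+ y. ennreal (cmod (f y)) ^ 2 \<partial>lborel)"
    by (simp add: nn_integral_add nn_integral_lborel_reflect[of "\<lambda>y. ennreal (cmod (K y)) ^ 2"])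
  also have "\<dots> < \<infinity>"
    using kernel_square_nn_integral_finite f2 by (simp add: ennreal_add_less_top less_top)
  finally show ?thesis
    unfolding integrable_iff_bounded by auto
qed

lemma integrable_conv_ess_bounded:
  assumes [measurable]: "f \<in> borel_measurable lborel" and "AE y in lborel. cmod (f y) \<le> B"
  shows "integrable lborel (\<lambda>y. K (x - y) * f y)"
proof (rule Bochner_Integration.integrable_bound)
  have "(\<integral>\<^sup>+ y. ennreal (norm (K (x - y))) \<partial>lborel) < \<infinity>"
    using kernel_nn_integral_finite nn_integral_lborel_reflect[of "\<lambda>y. ennreal (cmod (K y))"] by simp
  then have "integrable lborel (\<lambda>y. K (x - y))"
    unfolding integrable_iff_bounded by auto
  then show "integrable lborel (\<lambda>y. B * cmod (K (x - y)))"
    by auto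
  show "AE y in lborel. norm (K (x - y) * f y) \<le> norm (B * cmod (K (x - y)))"
    using assms(2)
  proof eventually_elim
    case (elim y)
    then have "cmod (f y) * cmod (K (x - y)) \<le> \<bar>B\<bar> * cmod (K (x - y))"
      by (intro mult_right_mono) auto
    then show ?case
      by (simp add: norm_mult abs_mult mult.commute)
  qed
qed measurable


lemma borel_measurable_conv:
  assumes [measurable]: "f \<in> borel_measurable lborel"
  shows "(\<lambda>x. LINT y|lborel. K (x - y) * f y) \<in> borel_measurable lborel"
proof -
  have "(\<lambda>(x, y). K (x - y) * f y) \<in> borel_measurable (lborel \<Otimes>\<^sub>M lborel)"
    by measurable
  then show ?thesis
    by (rule lborel.borel_measurable_lebesgue_integral[where f="\<lambda>x y. K (x - y) * f y"])
qed

lemma borel_measurable_conv_parametric: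
  fixes u :: "'t \<Rightarrow> real^3 \<Rightarrow> complex"
  assumes "(\<lambda>(t, y). u t y) \<in> borel_measurable (N \<Otimes>\<^sub>M lborel)"
  shows "(\<lambda>(t, x). LINT y|lborel. K (x - y) * u t y) \<in> borel_measurable (N \<Otimes>\<^sub>M lborel)"
proof -
  have u: "(\<lambda>p. u (fst p) (snd p)) \<in> borel_measurable (N \<Otimes>\<^sub>M lborel)"
    using assms by (simp add: case_prod_beta')
  have "(\<lambda>q. (fst (fst q), snd q)) \<in> (N \<Otimes>\<^sub>M lborel) \<Otimes>\<^sub>M lborel \<rightarrow>\<^sub>M N \<Otimes>\<^sub>M lborel"
    by measurable
  from measurable_compose[OF this u]
  have [measurable]: "(\<lambda>q. u (fst (fst q)) (snd q)) \<in> borel_measurable ((N \<Otimes>\<^sub>M lborel) \<Otimes>\<^sub>M lborel)"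
    by (simp only: fst_conv snd_conv)
  have "(\<lambda>(p, y). K (snd p - y) * u (fst p) y) \<in> borel_measurable ((N \<Otimes>\<^sub>M lborel) \<Otimes>\<^sub>M lborel)"
    unfolding case_prod_beta' by measurable
  from lborel.borel_measurable_lebesgue_integral[OF this] show ?thesis
    by (simp add: case_prod_beta')
qed

text \<open>Cauchy--Schwarz for the splitting \<open>|K| |f| = sqrt |K| * (sqrt |K| |f|)\<close>.\<close>

lemma norm_conv_power2_le:
  assumes "sq_int f"
  shows "ennreal (cmod (LINT y|lborel. K (x - y) * f y)) ^ 2 \<le>
    (\<integral>\<^sup>+ z. ennreal (cmod (K z)) \<partial>lborel) *
    (\<integral>\<^sup>+ y. ennreal (cmod (K (x - y))) * ennreal (cmod (f y)) ^ 2 \<partial>lborel)"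
proof -
  have [measurable]: "f \<in> borel_measurable lborel"
    using assms unfolding sq_int_def by auto
  have "ennreal (cmod (LINT y|lborel. K (x - y) * f y)) \<le> (\<integral>\<^sup>+ y. ennreal (norm (K (x - y) * f y)) \<partial>lborel)"
    by (rule integral_norm_bound_ennreal[OF integrable_conv_sq_int[OF assms]])
  also have "\<dots> = (\<integral>\<^sup>+ y. ennreal (sqrt (cmod (K (x - y)))) * ennreal (sqrt (cmod (K (x - y))) * cmod (f y)) \<partial>lborel)"
    by (intro nn_integral_cong)
       (simp add: norm_mult ennreal_mult''[symmetric] real_sqrt_mult[symmetric] mult.assoc[symmetric])
  finally have "ennreal (cmod (LINT y|lborel. K (x - y) * f y)) ^ 2 \<le>
      (\<integral>\<^sup>+ y. ennreal (sqrt (cmod (K (x - y)))) * ennreal (sqrt (cmod (K (x - y))) * cmod (f y)) \<partial>lborel) ^ 2"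
    by (rule power_mono_ennreal)
  also have "\<dots> \<le> (\<integral>\<^sup>+ y. ennreal (sqrt (cmod (K (x - y)))) ^ 2 \<partial>lborel) *
      (\<integral>\<^sup>+ y. ennreal (sqrt (cmod (K (x - y))) * cmod (f y)) ^ 2 \<partial>lborel)"
    by (rule Cauchy_Schwarz_nn_integral) auto
  also have "(\<integral>\<^sup>+ y. ennreal (sqrt (cmod (K (x - y)))) ^ 2 \<partial>lborel) = (\<integral>\<^sup>+ z. ennreal (cmod (K z)) \<partial>lborel)"
    using nn_integral_lborel_reflect[of "\<lambda>y. ennreal (cmod (K y))" x] by (simp add: ennreal_power)
  also have "(\<integral>\<^sup>+ y. ennreal (sqrt (cmod (K (x - y))) * cmod (f y)) ^ 2 \<partial>lborel)
      = (\<integral>\<^sup>+ y. ennreal (cmod (K (x - y))) * ennreal (cmod (f y)) ^ 2 \<partial>lborel)"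
    by (intro nn_integral_cong) (simp add: ennreal_power power_mult_distrib ennreal_mult''[symmetric])
  finally show ?thesis .
qed

lemma sq_int_conv:
  assumes "sq_int f"
  shows "sq_int (\<lambda>x. LINT y|lborel. K (x - y) * f y)"
proof -
  have [measurable]: "f \<in> borel_measurable lborel"
    and f2: "(\<integral>\<^sup>+ y. ennreal (cmod (f y)) ^ 2 \<partial>lborel) < \<infinity>"
    using assms unfolding sq_int_iff_nn_integral by auto
  define A where "A = (\<integral>\<^sup>+ z. ennreal (cmod (K z)) \<partial>lborel)"
  have A_translate: "(\<integral>\<^sup>+ x. ennreal (cmod (K (x - y))) \<partial>lborel) = A" for y
    unfolding A_def by (rule nn_integral_lborel_translate[of "\<lambda>y. ennreal (cmod (K y))"]) auto
  have "(\<integral>\<^sup>+ x. ennreal (cmod (LINT y|lborel. K (x - y) * f y)) ^ 2 \<partial>lborel)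
      \<le> (\<integral>\<^sup>+ x. A * (\<integral>\<^sup>+ y. ennreal (cmod (K (x - y))) * ennreal (cmod (f y)) ^ 2 \<partial>lborel) \<partial>lborel)"
    unfolding A_def by (intro nn_integral_mono norm_conv_power2_le[OF assms])
  also have "\<dots> = A * (\<integral>\<^sup>+ x. (\<integral>\<^sup>+ y. ennreal (cmod (K (x - y))) * ennreal (cmod (f y)) ^ 2 \<partial>lborel) \<partial>lborel)"
    by (rule nn_integral_cmult) measurable
  also have "(\<integral>\<^sup>+ x. (\<integral>\<^sup>+ y. ennreal (cmod (K (x - y))) * ennreal (cmod (f y)) ^ 2 \<partial>lborel) \<partial>lborel)
      = (\<integral>\<^sup>+ y. (\<integral>\<^sup>+ x. ennreal (cmod (K (x - y))) * ennreal (cmod (f y)) ^ 2 \<partial>lborel) \<partial>lborel)"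
    by (rule lborel_pair.Fubini'[symmetric]) measurable
  also have "\<dots> = (\<integral>\<^sup>+ y. A * ennreal (cmod (f y)) ^ 2 \<partial>lborel)"
    by (intro nn_integral_cong) (simp add: nn_integral_multc A_translate)
  also have "\<dots> = A * (\<integral>\<^sup>+ y. ennreal (cmod (f y)) ^ 2 \<partial>lborel)"
    by (rule nn_integral_cmult) measurable
  also have "A * (A * (\<integral>\<^sup>+ y. ennreal (cmod (f y)) ^ 2 \<partial>lborel)) < \<infinity>"
    using kernel_nn_integral_finite f2 unfolding A_def by (simp add: ennreal_mult_less_top less_top)
  finally show ?thesis
    unfolding sq_int_iff_nn_integral using borel_measurable_conv by auto
qed

end

section \<open>The \<open>X\<close> and \<open>S\<close> norms\<close>

lemma LP_uminus: "LP \<phi> M (\<lambda>y. - f y) = (\<lambda>x. - LP \<phi> M f x)"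
  unfolding LP_def by (simp add: fun_eq_iff)

context
  fixes \<phi> :: "real^3 \<Rightarrow> real" and M :: real
  assumes kernel: "bounded_integrable_kernel (LP_kernel \<phi> M)"
begin

lemma sq_int_LP: "sq_int f \<Longrightarrow> sq_int (LP \<phi> M f)"
  using sq_int_conv[OF kernel] by (simp add: LP_def[abs_def])

lemma LP_diff_sq_int:
  assumes "sq_int a" "sq_int b"
  shows "LP \<phi> M (\<lambda>y. a y - b y) = (\<lambda>x. LP \<phi> M a x - LP \<phi> M b x)"
  using integrable_conv_sq_int[OF kernel assms(1)] integrable_conv_sq_int[OF kernel assms(2)]
  by (simp add: LP_def fun_eq_iff right_diff_distrib integral_diff)

lemma L2x_LP_triangle:
  assumes a: "sq_int a" and b: "sq_int b"
  shows "L2x (LP \<phi> M a) \<le> L2x (LP \<phi> M b) + L2x (LP \<phi> M (\<lambda>y. a y - b y))"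
proof -
  have "LP \<phi> M a = (\<lambda>x. LP \<phi> M b x + LP \<phi> M (\<lambda>y. a y - b y) x)"
    using LP_diff_sq_int[OF a b] by (simp add: fun_eq_iff)
  then show ?thesis
    using L2x_triangle[OF sq_int_LP[OF b] sq_int_LP[OF sq_int_diff[OF a b]]] by simp
qed

end

definition sq_int_on :: "real \<Rightarrow> fn \<Rightarrow> bool" where
  "sq_int_on T u \<longleftrightarrow> (\<forall>t\<in>{0..T}. sq_int (u t))"

lemma sq_int_on_zero: "sq_int_on T (\<lambda>t y. 0)"
  unfolding sq_int_on_def using sq_int_zero by simp

lemma sq_int_on_lin: "sq_int_on T a \<Longrightarrow> sq_int_on T b \<Longrightarrow> sq_int_on T (\<lambda>t y. c * a t y + b t y)"
  unfolding sq_int_on_def using sq_int_lin by blast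

lemma LinfL2_LP_triangle:
  assumes "bounded_integrable_kernel (LP_kernel \<phi> M)" and a: "sq_int_on T a" and b: "sq_int_on T b"
    and "\<tau> \<le> T"
  shows "LinfL2 \<tau> (\<lambda>t. LP \<phi> M (a t)) \<le>
    LinfL2 \<tau> (\<lambda>t. LP \<phi> M (b t)) + LinfL2 T (\<lambda>t. LP \<phi> M (\<lambda>y. a t y - b t y))"
  unfolding LinfL2_def
proof (rule SUP_least)
  fix t assume t: "t \<in> {0..\<tau>}"
  then have "t \<in> {0..T}" using \<open>\<tau> \<le> T\<close> by auto
  then have "L2x (LP \<phi> M (a t)) \<le> L2x (LP \<phi> M (b t)) + L2x (LP \<phi> M (\<lambda>y. a t y - b t y))"
    using L2x_LP_triangle[OF assms(1)] a b by (auto simp: sq_int_on_def)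
  then have "ennreal (L2x (LP \<phi> M (a t))) \<le>
      ennreal (L2x (LP \<phi> M (b t))) + ennreal (L2x (LP \<phi> M (\<lambda>y. a t y - b t y)))"
    by (simp add: L2x_nonneg ennreal_leI flip: ennreal_plus)
  also have "\<dots> \<le> (SUP t\<in>{0..\<tau>}. ennreal (L2x (LP \<phi> M (b t)))) +
      (SUP t\<in>{0..T}. ennreal (L2x (LP \<phi> M (\<lambda>y. a t y - b t y))))"
    using t \<open>t \<in> {0..T}\<close> by (intro add_mono SUP_upper)
  finally show "ennreal (L2x (LP \<phi> M (a t))) \<le> \<dots>" .
qed

lemma suminf_weighted_triangle:
  fixes A B D :: "nat \<Rightarrow> ennreal"
  assumes "\<And>k. A k \<le> B k + D k"
  shows "(\<Sum>k. c k * A k) \<le> (\<Sum>k. c k * B k) + (\<Sum>k. c k * D k)"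
proof -
  have "(\<Sum>k. c k * A k) \<le> (\<Sum>k. c k * B k + c k * D k)"
    using assms by (intro suminf_le) (auto simp: distrib_left[symmetric] intro: mult_left_mono)
  also have "\<dots> = (\<Sum>k. c k * B k) + (\<Sum>k. c k * D k)"
    by (rule suminf_add[symmetric]) auto
  finally show ?thesis .
qed

lemma Xnorm_triangle:
  assumes "smooth3 \<phi>" and "\<And>\<xi>. r \<le> norm \<xi> \<Longrightarrow> \<phi> \<xi> = 0"
    and "sq_int_on T a" and "sq_int_on T b" and "\<tau> \<le> T"
  shows "Xnorm \<phi> c \<tau> a \<le> Xnorm \<phi> c \<tau> b + Xnorm \<phi> c T (\<lambda>t y. a t y - b t y)"
  unfolding Xnorm_def using assms
  by (intro suminf_weighted_triangle LinfL2_LP_triangle bounded_integrable_LP_kernel) auto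

lemma Xnorm_uminus: "Xnorm \<phi> c \<tau> (\<lambda>t y. - u t y) = Xnorm \<phi> c \<tau> u"
  unfolding Xnorm_def LinfL2_def LP_uminus by (simp add: L2x_uminus)

lemma mono_Xnorm: "mono (\<lambda>\<tau>. Xnorm \<phi> c \<tau> u)"
proof (rule monoI)
  fix \<tau> \<tau>' :: real assume "\<tau> \<le> \<tau>'"
  then have "LinfL2 \<tau> w \<le> LinfL2 \<tau>' w" for w
    unfolding LinfL2_def by (intro SUP_subset_mono) auto
  then show "Xnorm \<phi> c \<tau> u \<le> Xnorm \<phi> c \<tau>' u"
    unfolding Xnorm_def by (intro suminf_le mult_left_mono) auto
qed

lemma esssup_le_iff_emeasure:
  fixes g :: "'a \<Rightarrow> ereal"
  assumes [measurable]: "g \<in> borel_measurable M"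
  shows "esssup M g \<le> z \<longleftrightarrow> emeasure M {x \<in> space M. z < g x} = 0"
proof
  assume "esssup M g \<le> z"
  then have "emeasure M {x \<in> space M. z < g x} \<le> emeasure M {x \<in> space M. esssup M g < g x}"
    by (intro emeasure_mono) auto
  then show "emeasure M {x \<in> space M. z < g x} = 0"
    using esssup_zero_measure[of M g] by simp
next
  assume "emeasure M {x \<in> space M. z < g x} = 0"
  then have "AE x in M. x \<notin> {x \<in> space M. z < g x}"
    by (intro AE_not_in) auto
  then show "esssup M g \<le> z"
    by (intro esssup_I) (auto simp: not_less)
qed

lemma (in sigma_finite_measure) borel_measurable_esssup_parametric:
  fixes g :: "'t \<Rightarrow> 'a \<Rightarrow> ereal"
  assumes g[measurable]: "(\<lambda>p. g (fst p) (snd p)) \<in> borel_measurable (N \<Otimes>\<^sub>M M)"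
  shows "(\<lambda>t. esssup M (g t)) \<in> borel_measurable N"
proof (rule borel_measurableI_le)
  fix z
  define Q where "Q = {p \<in> space (N \<Otimes>\<^sub>M M). z < g (fst p) (snd p)}"
  have "Q \<in> sets (N \<Otimes>\<^sub>M M)"
    unfolding Q_def by measurable
  then have "(\<lambda>t. emeasure M (Pair t -` Q)) \<in> borel_measurable N"
    by (rule measurable_emeasure_Pair)
  then have "(\<lambda>t. emeasure M (Pair t -` Q)) -` {0} \<inter> space N \<in> sets N"
    by (rule measurable_sets) simp
  also have "(\<lambda>t. emeasure M (Pair t -` Q)) -` {0} \<inter> space N = {t \<in> space N. esssup M (g t) \<le> z}"
  proof -
    have "emeasure M (Pair t -` Q) = 0 \<longleftrightarrow> esssup M (g t) \<le> z" if "t \<in> space N" for t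
    proof -
      have "Pair t -` Q = {x \<in> space M. z < g t x}"
        using that by (auto simp: Q_def space_pair_measure)
      moreover have "g t \<in> borel_measurable M"
        using measurable_Pair2[OF g that] by simp
      ultimately show ?thesis
        using esssup_le_iff_emeasure[of "g t" M z] by simp
    qed
    then show ?thesis by auto
  qed
  finally show "{t \<in> space N. esssup M (g t) \<le> z} \<in> sets N" .
qed

lemma borel_measurable_Linfx_parametric:
  fixes F :: "'t \<Rightarrow> real^3 \<Rightarrow> complex"
  assumes "(\<lambda>(t, x). F t x) \<in> borel_measurable (N \<Otimes>\<^sub>M lborel)"
  shows "(\<lambda>t. Linfx (F t)) \<in> borel_measurable N"
proof -
  have "(\<lambda>p. ereal (cmod (F (fst p) (snd p)))) \<in> borel_measurable (N \<Otimes>\<^sub>M lborel)"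
    using assms unfolding case_prod_beta' by measurable
  from lborel.borel_measurable_esssup_parametric[OF this] show ?thesis
    unfolding Linfx_def by measurable
qed

lemma Linfx_finite_iff:
  assumes [measurable]: "f \<in> borel_measurable lborel"
  shows "Linfx f < \<infinity> \<longleftrightarrow> (\<exists>B. AE x in lborel. cmod (f x) \<le> B)"
proof
  assume "Linfx f < \<infinity>"
  then obtain B where B: "esssup lborel (\<lambda>x. ereal (cmod (f x))) \<le> ereal B"
    unfolding Linfx_def by (cases "esssup lborel (\<lambda>x. ereal (cmod (f x)))") auto
  have "AE x in lborel. cmod (f x) \<le> B"
    using esssup_AE[of "\<lambda>x. ereal (cmod (f x))" lborel]
  proof (rule eventually_mono)
    fix x assume "ereal (cmod (f x)) \<le> esssup lborel (\<lambda>x. ereal (cmod (f x)))"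
    then have "ereal (cmod (f x)) \<le> ereal B" using B by (rule order_trans)
    then show "cmod (f x) \<le> B" by simp
  qed
  then show "\<exists>B. AE x in lborel. cmod (f x) \<le> B" ..
next
  assume "\<exists>B. AE x in lborel. cmod (f x) \<le> B"
  then obtain B where "AE x in lborel. cmod (f x) \<le> B" ..
  then have "esssup lborel (\<lambda>x. ereal (cmod (f x))) \<le> ereal B"
    by (intro esssup_I) auto
  then have "Linfx f \<le> e2ennreal (ereal B)"
    unfolding Linfx_def by (rule e2ennreal_mono)
  then show "Linfx f < \<infinity>"
    by (simp add: le_less_trans)
qed

lemma Linfx_add:
  assumes [measurable]: "p \<in> borel_measurable lborel" "q \<in> borel_measurable lborel"
  shows "Linfx (\<lambda>x. p x + q x) \<le> Linfx p + Linfx q"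
proof -
  have nonneg: "0 \<le> esssup lborel (\<lambda>x. ereal (cmod (f x)))" for f :: "real^3 \<Rightarrow> complex"
  proof (rule ccontr)
    assume "\<not> ?thesis"
    then have negative: "esssup lborel (\<lambda>x. ereal (cmod (f x))) < 0" by simp
    have "AE x in (lborel :: (real^3) measure). False"
      using esssup_AE[of "\<lambda>x. ereal (cmod (f x))" lborel]
    proof (rule eventually_mono)
      fix x assume "ereal (cmod (f x)) \<le> esssup lborel (\<lambda>x. ereal (cmod (f x)))"
      then have "ereal (cmod (f x)) < 0" using negative by (rule le_less_trans)
      then show False by simp
    qed
    then show False
      by (simp add: ae_filter_eq_bot_iff trivial_limit_def[symmetric])
  qed
  have "esssup lborel (\<lambda>x. ereal (cmod (p x + q x))) \<le>
      esssup lborel (\<lambda>x. ereal (cmod (p x)) + ereal (cmod (q x)))"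
    by (rule esssup_mono) (auto intro: norm_triangle_ineq)
  also have "\<dots> \<le> esssup lborel (\<lambda>x. ereal (cmod (p x))) + esssup lborel (\<lambda>x. ereal (cmod (q x)))"
    by (rule esssup_add)
  finally have "Linfx (\<lambda>x. p x + q x) \<le>
      e2ennreal (esssup lborel (\<lambda>x. ereal (cmod (p x))) + esssup lborel (\<lambda>x. ereal (cmod (q x))))"
    unfolding Linfx_def by (rule e2ennreal_mono)
  also have "\<dots> = Linfx p + Linfx q"
    using nonneg[of p] nonneg[of q] unfolding Linfx_def
    by (cases "esssup lborel (\<lambda>x. ereal (cmod (p x)))"; cases "esssup lborel (\<lambda>x. ereal (cmod (q x)))")
      (auto simp: ennreal_plus)
  finally show ?thesis .
qed

lemma Linfx_uminus: "Linfx (\<lambda>x. - p x) = Linfx p"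
  unfolding Linfx_def by simp

lemma L2Linf_eq_ennreal_sqrt:
  "L2Linf \<tau> u = ennreal_sqrt (\<integral>\<^sup>+ t. (indicator {0..\<tau>} t * Linfx (u t)) ^ 2 \<partial>lborel)"
proof -
  have "(\<integral>\<^sup>+ t. indicator {0..\<tau>} t * (Linfx (u t))\<^sup>2 \<partial>lborel) =
      (\<integral>\<^sup>+ t. (indicator {0..\<tau>} t * Linfx (u t)) ^ 2 \<partial>lborel)"
    by (intro nn_integral_cong) (auto simp: indicator_def power2_eq_square)
  then show ?thesis
    unfolding L2Linf_def Let_def ennreal_sqrt_def by simp
qed

definition ess_bounded_on :: "real \<Rightarrow> fn \<Rightarrow> bool" where
  "ess_bounded_on T u \<longleftrightarrow>
     (\<lambda>(t, y). u t y) \<in> borel_measurable (restrict_space lborel {0..T} \<Otimes>\<^sub>M lborel) \<and>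
     (AE t in lborel. t \<in> {0..T} \<longrightarrow> Linfx (u t) < \<infinity>)"

lemma borel_measurable_slice_restrict:
  assumes "(\<lambda>(t, y). u t y) \<in> borel_measurable (restrict_space lborel {0..T} \<Otimes>\<^sub>M lborel)"
    and "t \<in> {0..T}"
  shows "u t \<in> borel_measurable lborel"
  using measurable_Pair2[OF assms(1), of t] assms(2) by (simp add: space_restrict_space)

lemma borel_measurable_indicator_times_restrict:
  fixes g :: "real \<Rightarrow> ennreal"
  assumes "g \<in> borel_measurable (restrict_space lborel {0..T})" and "\<tau> \<le> T"
  shows "(\<lambda>t. indicator {0..\<tau>} t * g t) \<in> borel_measurable lborel"
proof -
  have "(\<lambda>t. if t \<in> {0..T} then g t else 0) \<in> borel_measurable lborel"
    using assms(1) by (subst (asm) measurable_restrict_space_iff) auto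
  then have "(\<lambda>t. indicator {0..\<tau>} t * (if t \<in> {0..T} then g t else 0)) \<in> borel_measurable lborel"
    by measurable
  also have "(\<lambda>t. indicator {0..\<tau>} t * (if t \<in> {0..T} then g t else 0)) = (\<lambda>t. indicator {0..\<tau>} t * g t)"
    using assms(2) by (auto simp: fun_eq_iff indicator_def)
  finally show ?thesis .
qed

lemma ess_bounded_on_zero: "ess_bounded_on T (\<lambda>t y. 0)"
  using Linfx_finite_iff[of "\<lambda>y. 0"] unfolding ess_bounded_on_def by auto

lemma Linfx_lin_finite:
  assumes [measurable]: "a \<in> borel_measurable lborel" "b \<in> borel_measurable lborel"
    and "Linfx a < \<infinity>" and "Linfx b < \<infinity>"
  shows "Linfx (\<lambda>y. c * a y + b y) < \<infinity>"
proof -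
  obtain Ba where "AE x in lborel. cmod (a x) \<le> Ba"
    using Linfx_finite_iff[OF assms(1)] assms(3) by blast
  moreover obtain Bb where "AE x in lborel. cmod (b x) \<le> Bb"
    using Linfx_finite_iff[OF assms(2)] assms(4) by blast
  ultimately have "AE x in lborel. cmod (c * a x + b x) \<le> cmod c * Ba + Bb"
  proof eventually_elim
    case (elim x)
    have "cmod (c * a x + b x) \<le> cmod c * cmod (a x) + cmod (b x)"
      using norm_triangle_ineq[of "c * a x" "b x"] by (simp add: norm_mult)
    also have "\<dots> \<le> cmod c * Ba + Bb"
      using elim by (intro add_mono mult_left_mono) auto
    finally show ?case .
  qed
  then show ?thesis
    by (subst Linfx_finite_iff) auto
qed

lemma ess_bounded_on_lin:
  assumes a: "ess_bounded_on T a" and b: "ess_bounded_on T b"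
  shows "ess_bounded_on T (\<lambda>t y. c * a t y + b t y)"
proof -
  let ?RT = "restrict_space lborel {0..T}"
  have am: "(\<lambda>(t, y). a t y) \<in> borel_measurable (?RT \<Otimes>\<^sub>M lborel)"
    and bm: "(\<lambda>(t, y). b t y) \<in> borel_measurable (?RT \<Otimes>\<^sub>M lborel)"
    and a_AE: "AE t in lborel. t \<in> {0..T} \<longrightarrow> Linfx (a t) < \<infinity>"
    and b_AE: "AE t in lborel. t \<in> {0..T} \<longrightarrow> Linfx (b t) < \<infinity>"
    using a b unfolding ess_bounded_on_def by auto
  then have "(\<lambda>(t, y). c * a t y + b t y) \<in> borel_measurable (?RT \<Otimes>\<^sub>M lborel)"
    unfolding case_prod_beta' by measurable
  moreover have "AE t in lborel. t \<in> {0..T} \<longrightarrow> Linfx (\<lambda>y. c * a t y + b t y) < \<infinity>"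
    using a_AE b_AE
  proof (eventually_elim, intro impI)
    case (elim t)
    assume t: "t \<in> {0..T}"
    show "Linfx (\<lambda>y. c * a t y + b t y) < \<infinity>"
      using elim t borel_measurable_slice_restrict[OF am t] borel_measurable_slice_restrict[OF bm t]
      by (intro Linfx_lin_finite) auto
  qed
  ultimately show ?thesis
    unfolding ess_bounded_on_def by blast
qed

lemma Sspace_imp_ess_bounded_on:
  assumes "Sspace \<phi> c T u"
  shows "ess_bounded_on T u"
proof -
  have um: "(\<lambda>(t, y). u t y) \<in> borel_measurable (restrict_space lborel {0..T} \<Otimes>\<^sub>M lborel)"
    and "L2Linf T u < \<infinity>"
    using assms unfolding Sspace_def L2tLinfx_space_def by auto
  then have "(\<integral>\<^sup>+ t. (indicator {0..T} t * Linfx (u t)) ^ 2 \<partial>lborel) \<noteq> \<infinity>"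
    unfolding L2Linf_eq_ennreal_sqrt ennreal_sqrt_def by (auto split: if_splits)
  moreover have "(\<lambda>t. indicator {0..T} t * Linfx (u t)) \<in> borel_measurable lborel"
    using borel_measurable_indicator_times_restrict[OF borel_measurable_Linfx_parametric[OF um] order_refl] .
  ultimately have "AE t in lborel. (indicator {0..T} t * Linfx (u t)) ^ 2 \<noteq> \<infinity>"
    by (intro nn_integral_PInf_AE) auto
  then have "AE t in lborel. t \<in> {0..T} \<longrightarrow> Linfx (u t) < \<infinity>"
  proof (eventually_elim, intro impI)
    case (elim t)
    assume "t \<in> {0..T}"
    then have "Linfx (u t) ^ 2 \<noteq> \<infinity>" using elim by simp
    then show "Linfx (u t) < \<infinity>"
      by (cases "Linfx (u t)") (auto simp: ennreal_power)
  qed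
  with um show ?thesis
    unfolding ess_bounded_on_def by blast
qed

lemma Linfx_LP_triangle:
  assumes kernel: "bounded_integrable_kernel (LP_kernel \<phi> M)"
    and a[measurable]: "a \<in> borel_measurable lborel" and b[measurable]: "b \<in> borel_measurable lborel"
    and "Linfx a < \<infinity>" and "Linfx b < \<infinity>"
  shows "Linfx (LP \<phi> M a) \<le> Linfx (LP \<phi> M b) + Linfx (LP \<phi> M (\<lambda>y. a y - b y))"
proof -
  obtain Ba where Ba: "AE x in lborel. cmod (a x) \<le> Ba"
    using Linfx_finite_iff[OF a] \<open>Linfx a < \<infinity>\<close> by blast
  obtain Bb where Bb: "AE x in lborel. cmod (b x) \<le> Bb"
    using Linfx_finite_iff[OF b] \<open>Linfx b < \<infinity>\<close> by blast
  have "LP \<phi> M a = (\<lambda>x. LP \<phi> M b x + LP \<phi> M (\<lambda>y. a y - b y) x)"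
    using integrable_conv_ess_bounded[OF kernel a Ba] integrable_conv_ess_bounded[OF kernel b Bb]
    by (simp add: LP_def fun_eq_iff right_diff_distrib integral_diff)
  moreover have "LP \<phi> M b \<in> borel_measurable lborel"
    and "LP \<phi> M (\<lambda>y. a y - b y) \<in> borel_measurable lborel"
    unfolding LP_def[abs_def] by (intro borel_measurable_conv[OF kernel]; measurable)+
  ultimately show ?thesis
    using Linfx_add by metis
qed

lemma L2Linf_mono: "\<tau> \<le> \<tau>' \<Longrightarrow> L2Linf \<tau> w \<le> L2Linf \<tau>' w"
  unfolding L2Linf_eq_ennreal_sqrt
  by (intro ennreal_sqrt_mono nn_integral_mono power_mono_ennreal mult_right_mono) (auto simp: indicator_def)

lemma L2Linf_LP_triangle:
  assumes kernel: "bounded_integrable_kernel (LP_kernel \<phi> M)"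
    and a: "ess_bounded_on T a" and b: "ess_bounded_on T b" and "\<tau> \<le> T"
  shows "L2Linf \<tau> (\<lambda>t. LP \<phi> M (a t)) \<le>
    L2Linf \<tau> (\<lambda>t. LP \<phi> M (b t)) + L2Linf T (\<lambda>t. LP \<phi> M (\<lambda>y. a t y - b t y))"
proof -
  let ?RT = "restrict_space lborel {0..T}"
  have am: "(\<lambda>(t, y). a t y) \<in> borel_measurable (?RT \<Otimes>\<^sub>M lborel)"
    and bm: "(\<lambda>(t, y). b t y) \<in> borel_measurable (?RT \<Otimes>\<^sub>M lborel)"
    and a_AE: "AE t in lborel. t \<in> {0..T} \<longrightarrow> Linfx (a t) < \<infinity>"
    and b_AE: "AE t in lborel. t \<in> {0..T} \<longrightarrow> Linfx (b t) < \<infinity>"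
    using a b unfolding ess_bounded_on_def by auto
  then have dm: "(\<lambda>(t, y). a t y - b t y) \<in> borel_measurable (?RT \<Otimes>\<^sub>M lborel)"
    unfolding case_prod_beta' by measurable
  define F where "F w t = indicator {0..\<tau>} t * Linfx (LP \<phi> M (w t))" for w :: fn and t
  have F_meas: "F w \<in> borel_measurable lborel"
    if "(\<lambda>(t, y). w t y) \<in> borel_measurable (?RT \<Otimes>\<^sub>M lborel)" for w
    unfolding F_def LP_def
    by (rule borel_measurable_indicator_times_restrict[OF borel_measurable_Linfx_parametric \<open>\<tau> \<le> T\<close>])
      (rule borel_measurable_conv_parametric[OF kernel that])
  have "AE t in lborel. F a t \<le> F b t + F (\<lambda>t y. a t y - b t y) t"
    using a_AE b_AE
  proof eventually_elim
    case (elim t)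
    show ?case
    proof (cases "t \<in> {0..\<tau>}")
      case True
      then have t: "t \<in> {0..T}" using \<open>\<tau> \<le> T\<close> by auto
      then show ?thesis
        using True elim Linfx_LP_triangle[OF kernel borel_measurable_slice_restrict[OF am t]
            borel_measurable_slice_restrict[OF bm t]]
        by (simp add: F_def)
    qed (simp add: F_def)
  qed
  moreover have L2Linf_F: "L2Linf \<tau> (\<lambda>t. LP \<phi> M (w t)) = ennreal_sqrt (\<integral>\<^sup>+ t. F w t ^ 2 \<partial>lborel)" for w
    unfolding L2Linf_eq_ennreal_sqrt F_def by simp
  ultimately have "L2Linf \<tau> (\<lambda>t. LP \<phi> M (a t)) \<le>
      L2Linf \<tau> (\<lambda>t. LP \<phi> M (b t)) + L2Linf \<tau> (\<lambda>t. LP \<phi> M (\<lambda>y. a t y - b t y))"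
    unfolding L2Linf_F using F_meas[OF am] F_meas[OF bm] F_meas[OF dm]
    by (intro Minkowski_nn_integral_L2)
  also have "\<dots> \<le> L2Linf \<tau> (\<lambda>t. LP \<phi> M (b t)) + L2Linf T (\<lambda>t. LP \<phi> M (\<lambda>y. a t y - b t y))"
    using L2Linf_mono[OF \<open>\<tau> \<le> T\<close>] by (rule add_left_mono)
  finally show ?thesis .
qed

lemma Snorm_triangle:
  assumes "smooth3 \<phi>" and "\<And>\<xi>. r \<le> norm \<xi> \<Longrightarrow> \<phi> \<xi> = 0"
    and "ess_bounded_on T a" and "ess_bounded_on T b" and "\<tau> \<le> T"
  shows "Snorm \<phi> c \<tau> a \<le> Snorm \<phi> c \<tau> b + Snorm \<phi> c T (\<lambda>t y. a t y - b t y)"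
  unfolding Snorm_def using assms
  by (intro suminf_weighted_triangle L2Linf_LP_triangle bounded_integrable_LP_kernel) auto

lemma Snorm_uminus: "Snorm \<phi> c \<tau> (\<lambda>t y. - u t y) = Snorm \<phi> c \<tau> u"
  unfolding Snorm_def LP_uminus L2Linf_eq_ennreal_sqrt by (simp add: Linfx_uminus)

lemma mono_Snorm: "mono (\<lambda>\<tau>. Snorm \<phi> c \<tau> u)"
proof (rule monoI)
  fix \<tau> \<tau>' :: real assume "\<tau> \<le> \<tau>'"
  then have "L2Linf \<tau> w \<le> L2Linf \<tau>' w" for w
    by (rule L2Linf_mono)
  then show "Snorm \<phi> c \<tau> u \<le> Snorm \<phi> c \<tau>' u"
    unfolding Snorm_def by (intro suminf_le mult_left_mono) auto
qed

lemma borel_measurable_Xnorm_of_strongly_meas: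
  assumes "smooth3 \<phi>" and "\<And>\<xi>. r \<le> norm \<xi> \<Longrightarrow> \<phi> \<xi> = 0"
    and "\<And>\<omega>. \<omega> \<in> space G \<Longrightarrow> Xspace \<phi> c T (v \<omega>)"
    and "strongly_meas G (Xspace \<phi> c T) (Xnorm \<phi> c T) v"
  shows "(\<lambda>(\<omega>, \<tau>). enn2real (Xnorm \<phi> c \<tau> (v \<omega>))) \<in> borel_measurable (G \<Otimes>\<^sub>M restrict_space borel {0..T})"
proof (rule borel_measurable_norm_of_strongly_meas[where P="sq_int_on T"])
  show "Xnorm \<phi> c \<tau> a \<le> Xnorm \<phi> c \<tau> b + Xnorm \<phi> c T (\<lambda>t y. a t y - b t y)"
    if "sq_int_on T a" "sq_int_on T b" "\<tau> \<le> T" for a b \<tau>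
    using Xnorm_triangle[OF assms(1,2) that] .
  show "sq_int_on T u" if "Xspace \<phi> c T u" for u
    using that by (simp add: Xspace_def CL2_def sq_int_on_def)
  show "Xspace \<phi> c T (v \<omega>) \<and> Xnorm \<phi> c T (v \<omega>) < \<infinity>" if "\<omega> \<in> space G" for \<omega>
    using assms(3)[OF that] by (simp add: Xspace_def)
qed (fact mono_Xnorm Xnorm_uminus sq_int_on_zero sq_int_on_lin assms(4))+

lemma borel_measurable_Snorm_of_strongly_meas:
  assumes "smooth3 \<phi>" and "\<And>\<xi>. r \<le> norm \<xi> \<Longrightarrow> \<phi> \<xi> = 0"
    and "\<And>\<omega>. \<omega> \<in> space G \<Longrightarrow> Sspace \<phi> c T (v \<omega>)"
    and "strongly_meas G (Sspace \<phi> c T) (Snorm \<phi> c T) v"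
  shows "(\<lambda>(\<omega>, \<tau>). enn2real (Snorm \<phi> c \<tau> (v \<omega>))) \<in> borel_measurable (G \<Otimes>\<^sub>M restrict_space borel {0..T})"
proof (rule borel_measurable_norm_of_strongly_meas[where P="ess_bounded_on T"])
  show "Snorm \<phi> c \<tau> a \<le> Snorm \<phi> c \<tau> b + Snorm \<phi> c T (\<lambda>t y. a t y - b t y)"
    if "ess_bounded_on T a" "ess_bounded_on T b" "\<tau> \<le> T" for a b \<tau>
    using Snorm_triangle[OF assms(1,2) that] .
  show "Sspace \<phi> c T (v \<omega>) \<and> Snorm \<phi> c T (v \<omega>) < \<infinity>" if "\<omega> \<in> space G" for \<omega>
    using assms(3)[OF that] by (simp add: Sspace_def)
qed (fact mono_Snorm Snorm_uminus ess_bounded_on_zero ess_bounded_on_lin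
      Sspace_imp_ess_bounded_on assms(4))+

theorem lemmaA4:
  fixes M G :: "'w measure" and \<phi> :: "real^3 \<Rightarrow> real" and n :: nat and D T :: real
  assumes "prob_space M" and "subalgebra M G"
    and "smooth3 \<phi>"
    and "\<forall>\<xi>. norm \<xi> < 1 \<longrightarrow> \<phi> \<xi> = 1"
    and "\<forall>\<xi>. norm \<xi> \<ge> 2 \<longrightarrow> \<phi> \<xi> = 0"
    and "D > 0" and "T > 0"
  defines "N \<equiv> (2::real) ^ n"
  shows
   "(\<forall>v :: 'w \<Rightarrow> fn. (\<forall>\<omega>\<in>space M. Xspace \<phi> (cND N D) T (v \<omega>)) \<and>
        strongly_meas G (Xspace \<phi> (cND N D) T) (Xnorm \<phi> (cND N D) T) v \<longrightarrow>
        (\<lambda>(\<omega>, \<tau>). enn2real (Xnorm \<phi> (cND N D) \<tau> (v \<omega>)))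
          \<in> borel_measurable (G \<Otimes>\<^sub>M restrict_space borel {0..T}))
  \<and> (\<forall>v :: 'w \<Rightarrow> fn. (\<forall>\<omega>\<in>space M. Xspace \<phi> (cleND N D) T (v \<omega>)) \<and>
        strongly_meas G (Xspace \<phi> (cleND N D) T) (Xnorm \<phi> (cleND N D) T) v \<longrightarrow>
        (\<lambda>(\<omega>, \<tau>). enn2real (Xnorm \<phi> (cleND N D) \<tau> (v \<omega>)))
          \<in> borel_measurable (G \<Otimes>\<^sub>M restrict_space borel {0..T}))
  \<and> (\<forall>v :: 'w \<Rightarrow> fn. (\<forall>\<omega>\<in>space M. Sspace \<phi> (cND N D) T (v \<omega>)) \<and>
        strongly_meas G (Sspace \<phi> (cND N D) T) (Snorm \<phi> (cND N D) T) v \<longrightarrow>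
        (\<lambda>(\<omega>, \<tau>). enn2real (Snorm \<phi> (cND N D) \<tau> (v \<omega>)))
          \<in> borel_measurable (G \<Otimes>\<^sub>M restrict_space borel {0..T}))
  \<and> (\<forall>v :: 'w \<Rightarrow> fn. (\<forall>\<omega>\<in>space M. Sspace \<phi> (cleND N D) T (v \<omega>)) \<and>
        strongly_meas G (Sspace \<phi> (cleND N D) T) (Snorm \<phi> (cleND N D) T) v \<longrightarrow>
        (\<lambda>(\<omega>, \<tau>). enn2real (Snorm \<phi> (cleND N D) \<tau> (v \<omega>)))
          \<in> borel_measurable (G \<Otimes>\<^sub>M restrict_space borel {0..T}))"
proof -
  \<comment> \<open>besides \<open>G\<close> being a subalgebra, only smoothness and compact support of \<open>\<phi>\<close> are used\<close>
  have space: "space M = space G"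
    using \<open>subalgebra M G\<close> unfolding subalgebra_def by simp
  have supp: "\<And>\<xi>. 2 \<le> norm \<xi> \<Longrightarrow> \<phi> \<xi> = 0"
    using assms(5) by simp
  show ?thesis
    unfolding space
    by (blast intro: borel_measurable_Xnorm_of_strongly_meas[OF \<open>smooth3 \<phi>\<close> supp]
        borel_measurable_Snorm_of_strongly_meas[OF \<open>smooth3 \<phi>\<close> supp])
qed

end
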